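(* Let $\mathbf{y}=\mathbf{y}_1\sqcup\cdots\sqcup\mathbf{y}_d$ with $\mathbf{y}_i=\{y_{i1},\dots,y_{in}\}$, and let $f(\mathbf{y})$ be computed by a UPT set-multilinear circuit of preimage-width $w\ge1$ whose parse-tree shape $T$ has depth at most $r$ and in which every $\times$ node has exactly two ordered children. Suppose $\operatorname{char}\mathbb{F}=0$ or $\operatorname{char}\mathbb{F}>d\,n\,w^{r}$. For $i\in[d]$ let $a_1a_2\cdots a_q\in\{L,R\}^q$ ($q\le r$) be the signature of $\mathbf{y}_i$, and define $\Psi(y_{ij})=\Phi_{a_1}(\Phi_{a_2}(\cdots\Phi_{a_q}(t^j)\cdots))\in\mathbb{F}[t]$. Then $f\ne0$ if and only if $f(\Psi(\mathbf{y}))\ne0$.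
   Context: A circuit computing $f\in\mathbb{F}[\mathbf{y}]$ is set-multilinear w.r.t. the partition if each gate $g$ is labelled by $S_g\subseteq[d]$ and computes a polynomial in $\bigcup_{i\in S_g}\mathbf{y}_i$ whose monomials each contain exactly one variable of $\mathbf{y}_i$ for each $i\in S_g$; $+$ gates share the label of their children; a $\times$ gate with children $g_1,g_2$ has $S_g=S_{g_1}\sqcup S_{g_2}$. Parse tree: from the root keep all children of $\times$ gates and one child of each $+$ gate; its shape is the ordered rooted tree with node labels. UPT set-multilinear: all parse trees have the same identically-labelled shape $T$; preimage-width is the maximum over nodes $\tau\in T$ of the number of gates occupying $\tau$ in some parse tree. Each $i\in[d]$ labels exactly one leaf $\tau_i$ of $T$ (the leaf where variables of $\mathbf{y}_i$ are read). The signature of $\mathbf{y}_i$ is the sequence obtained by walking from the root of $T$ to $\tau_i$ and recording $L$ (resp. $R$) each time the walk goes to the left (resp. right) child of a $\times$ node. $\Phi_L,\Phi_R$ are the $\mathbb{F}$-algebra endomorphisms of $\mathbb{F}[t]$ with $\Phi_L(t)=t^w$ and $\Phi_R(t)=t^w+t^{w-1}$. *)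

theory Defs
  imports "HOL-Library.Poly_Mapping" "HOL-Computational_Algebra.Polynomial"
begin

text \<open>Variable y_ij is encoded as the pair (i,j), with 1 \<le> i \<le> d and 1 \<le> j \<le> n.\<close>

type_synonym 'a mpoly = "((nat \<times> nat) \<Rightarrow>\<^sub>0 nat) \<Rightarrow>\<^sub>0 'a"

definition mvar :: "nat \<times> nat \<Rightarrow> 'a::comm_ring_1 mpoly" where
  "mvar v = Poly_Mapping.single (Poly_Mapping.single v 1) 1"

definition mconst :: "'a::comm_ring_1 \<Rightarrow> 'a mpoly" where
  "mconst c = Poly_Mapping.single 0 c"

definition msubst :: "(nat \<times> nat \<Rightarrow> 'a::comm_ring_1 poly) \<Rightarrow> 'a mpoly \<Rightarrow> 'a poly" where
  "msubst \<Psi> p = (\<Sum>m\<in>Poly_Mapping.keys p. smult (Poly_Mapping.lookup p m) (\<Prod>v\<in>Poly_Mapping.keys m. \<Psi> v ^ Poly_Mapping.lookup m v))"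

text \<open>A circuit is a map from gate indices to gates; gates are numbered topologically
  (children have smaller index), which encodes acyclicity.\<close>

datatype 'a gate = Inp nat nat | Add "('a \<times> nat) list" | Mul nat nat

definition circuit_wf :: "(nat \<Rightarrow> 'a gate) \<Rightarrow> nat \<Rightarrow> bool" where
  "circuit_wf C N \<longleftrightarrow> (\<forall>g<N. case C g of
       Inp i j \<Rightarrow> True
     | Add cs \<Rightarrow> (\<forall>(c,k)\<in>set cs. k < g)
     | Mul a b \<Rightarrow> a < g \<and> b < g)"

definition getv :: "'b::zero list \<Rightarrow> nat \<Rightarrow> 'b" where
  "getv vs k = (if k < length vs then vs ! k else 0)"

definition gate_val :: "(nat \<Rightarrow> 'a::comm_ring_1 gate) \<Rightarrow> 'a mpoly list \<Rightarrow> nat \<Rightarrow> 'a mpoly" where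
  "gate_val C vs g = (case C g of
       Inp i j \<Rightarrow> mvar (i,j)
     | Add cs \<Rightarrow> (\<Sum>(c,k)\<leftarrow>cs. mconst c * getv vs k)
     | Mul a b \<Rightarrow> getv vs a * getv vs b)"

primrec vals :: "(nat \<Rightarrow> 'a::comm_ring_1 gate) \<Rightarrow> nat \<Rightarrow> 'a mpoly list" where
  "vals C 0 = []"
| "vals C (Suc g) = vals C g @ [gate_val C (vals C g) g]"

definition circ_val :: "(nat \<Rightarrow> 'a::comm_ring_1 gate) \<Rightarrow> nat \<Rightarrow> 'a mpoly" where
  "circ_val C g = vals C (Suc g) ! g"

text \<open>Set-multilinearity w.r.t. the partition y_1,...,y_d (each of size n), given
  by a labelling S of the gates; the root gate rt is labelled [d].\<close>
definition set_multilinear ::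
  "(nat \<Rightarrow> 'a gate) \<Rightarrow> nat \<Rightarrow> (nat \<Rightarrow> nat set) \<Rightarrow> nat \<Rightarrow> nat \<Rightarrow> nat \<Rightarrow> bool" where
  "set_multilinear C N S d n rt \<longleftrightarrow> S rt = {1..d} \<and>
     (\<forall>g<N. S g \<subseteq> {1..d} \<and> (case C g of
         Inp i j \<Rightarrow> 1 \<le> i \<and> i \<le> d \<and> 1 \<le> j \<and> j \<le> n \<and> S g = {i}
       | Add cs \<Rightarrow> (\<forall>(c,k)\<in>set cs. S k = S g)
       | Mul a b \<Rightarrow> S a \<inter> S b = {} \<and> S g = S a \<union> S b))"

datatype ptree = PT nat "ptree list"

inductive is_ptree :: "(nat \<Rightarrow> 'a gate) \<Rightarrow> nat \<Rightarrow> ptree \<Rightarrow> bool" for C where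
  inp: "C g = Inp i j \<Longrightarrow> is_ptree C g (PT g [])"
| add: "C g = Add cs \<Longrightarrow> (c, k) \<in> set cs \<Longrightarrow> is_ptree C k t \<Longrightarrow> is_ptree C g (PT g [t])"
| mul: "C g = Mul a b \<Longrightarrow> is_ptree C a ta \<Longrightarrow> is_ptree C b tb \<Longrightarrow> is_ptree C g (PT g [ta, tb])"

datatype stree = SNode "nat set" "stree list"

fun shape :: "(nat \<Rightarrow> nat set) \<Rightarrow> ptree \<Rightarrow> stree" where
  "shape S (PT g ts) = SNode (S g) (map (shape S) ts)"

text \<open>Positions (nodes) of a shape, as paths of child indices from the root.\<close>
inductive pos :: "stree \<Rightarrow> nat list \<Rightarrow> bool" where
  here: "pos t []"
| child: "k < length ts \<Longrightarrow> pos (ts ! k) p \<Longrightarrow> pos (SNode l ts) (k # p)"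

fun subtree :: "stree \<Rightarrow> nat list \<Rightarrow> stree" where
  "subtree t [] = t"
| "subtree (SNode l ts) (k # p) = subtree (ts ! k) p"

fun pgate :: "ptree \<Rightarrow> nat list \<Rightarrow> nat" where
  "pgate (PT g ts) [] = g"
| "pgate (PT g ts) (k # p) = pgate (ts ! k) p"

definition preimage :: "(nat \<Rightarrow> 'a gate) \<Rightarrow> nat \<Rightarrow> nat list \<Rightarrow> nat set" where
  "preimage C rt p = {pgate t p | t. is_ptree C rt t}"

definition preimage_width :: "(nat \<Rightarrow> 'a gate) \<Rightarrow> nat \<Rightarrow> stree \<Rightarrow> nat" where
  "preimage_width C rt T = Max {card (preimage C rt p) | p. pos T p}"

definition depth_le :: "stree \<Rightarrow> nat \<Rightarrow> bool" where
  "depth_le T r \<longleftrightarrow> (\<forall>p. pos T p \<longrightarrow> length p \<le> r)"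

datatype dir = L | R

text \<open>Record L/R whenever the walk passes to the left/right child of a \<times> node
  (the nodes with two children; + nodes have exactly one child in a shape).\<close>
fun signature :: "stree \<Rightarrow> nat list \<Rightarrow> dir list" where
  "signature t [] = []"
| "signature (SNode l ts) (k # p) =
     (if length ts = 2 then (if k = 0 then L else R) # signature (ts ! k) p
      else signature (ts ! k) p)"

definition leaf_pos :: "stree \<Rightarrow> nat \<Rightarrow> nat list" where
  "leaf_pos T i = (THE p. pos T p \<and> subtree T p = SNode {i} [])"

definition Phi :: "nat \<Rightarrow> dir \<Rightarrow> 'a::comm_ring_1 poly \<Rightarrow> 'a poly" where
  "Phi w a q = (case a of
       L \<Rightarrow> pcompose q (monom 1 w)
     | R \<Rightarrow> pcompose q (monom 1 w + monom 1 (w - 1)))"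

definition Psi :: "nat \<Rightarrow> stree \<Rightarrow> nat \<times> nat \<Rightarrow> 'a::comm_ring_1 poly" where
  "Psi w T v = foldr (Phi w) (signature T (leaf_pos T (fst v))) (monom 1 (snd v))"

end

theory Submission
  imports Defs
begin

text \<open>We show, from the leaves of \<open>T\<close> upwards, that at every node the substitution is
  injective on the span of the polynomials computed by the at most \<open>w\<close> gates occupying that
  node; at the root this is the theorem. Leaves and \<open>+\<close> nodes are immediate. At a \<open>\<times>\<close> node,
  a vanishing combination \<open>\<Sum>\<^sub>g c\<^sub>g f(a\<^sub>g) f(b\<^sub>g)\<close> over the gates \<open>g = a\<^sub>g \<times> b\<^sub>g\<close> yields a
  bivariate \<open>P(x, y) = \<Sum>\<^sub>g c\<^sub>g X\<^sub>g(x) Y\<^sub>g(y)\<close>, with \<open>X\<^sub>g, Y\<^sub>g\<close> the images of \<open>f(a\<^sub>g), f(b\<^sub>g)\<close> at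
  the children, of rank at most \<open>w\<close> and with \<open>P(t\<^sup>w, t\<^sup>w + t\<^bsup>w-1\<^esup>) = 0\<close>. Such a \<open>P\<close> is divisible
  by \<open>(y - x)\<^sup>w - x\<^bsup>w-1\<^esup>\<close>, so the top-degree form of \<open>P\<close> is divisible by \<open>(x - 1)\<^sup>w\<close> while having
  at most \<open>w\<close> terms; below the characteristic this forces \<open>P = 0\<close>. Injectivity at the two
  children, whose variable sets are disjoint, turns \<open>P = 0\<close> back into the vanishing of the
  combination.\<close>

section \<open>Substituting univariate polynomials into multivariate ones\<close>

definition monom_eval :: "(nat \<times> nat \<Rightarrow> 'a::comm_ring_1 poly) \<Rightarrow> ((nat \<times> nat) \<Rightarrow>\<^sub>0 nat) \<Rightarrow> 'a poly" where
  "monom_eval \<Psi> m = (\<Prod>v\<in>Poly_Mapping.keys m. \<Psi> v ^ Poly_Mapping.lookup m v)"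

lemma monom_eval_superset:
  assumes "finite K" "Poly_Mapping.keys m \<subseteq> K"
  shows "monom_eval \<Psi> m = (\<Prod>v\<in>K. \<Psi> v ^ Poly_Mapping.lookup m v)"
  unfolding monom_eval_def
  by (rule prod.mono_neutral_left[OF assms]) (auto simp: in_keys_iff)

lemma monom_eval_add: "monom_eval \<Psi> (m1 + m2) = monom_eval \<Psi> m1 * monom_eval \<Psi> m2"
proof -
  let ?K = "Poly_Mapping.keys m1 \<union> Poly_Mapping.keys m2"
  have "monom_eval \<Psi> (m1 + m2) = (\<Prod>v\<in>?K. \<Psi> v ^ Poly_Mapping.lookup (m1 + m2) v)"
    using keys_add[of m1 m2] by (intro monom_eval_superset) auto
  also have "\<dots> = (\<Prod>v\<in>?K. \<Psi> v ^ Poly_Mapping.lookup m1 v) * (\<Prod>v\<in>?K. \<Psi> v ^ Poly_Mapping.lookup m2 v)"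
    by (simp add: lookup_add power_add prod.distrib)
  also have "\<dots> = monom_eval \<Psi> m1 * monom_eval \<Psi> m2"
    by (subst (1 2) monom_eval_superset[of ?K]) auto
  finally show ?thesis .
qed

lemma msubst_superset:
  assumes "finite K" "Poly_Mapping.keys p \<subseteq> K"
  shows "msubst \<Psi> p = (\<Sum>m\<in>K. smult (Poly_Mapping.lookup p m) (monom_eval \<Psi> m))"
  unfolding msubst_def monom_eval_def[symmetric]
  by (rule sum.mono_neutral_left[OF assms]) (auto simp: in_keys_iff)

lemma msubst_zero [simp]: "msubst \<Psi> 0 = 0"
  by (simp add: msubst_def)

lemma msubst_add: "msubst \<Psi> (p + q) = msubst \<Psi> p + msubst \<Psi> q"
proof -
  let ?K = "Poly_Mapping.keys p \<union> Poly_Mapping.keys q"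
  have "msubst \<Psi> (p + q) = (\<Sum>m\<in>?K. smult (Poly_Mapping.lookup (p + q) m) (monom_eval \<Psi> m))"
    using keys_add[of p q] by (intro msubst_superset) auto
  also have "\<dots> = (\<Sum>m\<in>?K. smult (Poly_Mapping.lookup p m) (monom_eval \<Psi> m))
                + (\<Sum>m\<in>?K. smult (Poly_Mapping.lookup q m) (monom_eval \<Psi> m))"
    by (simp add: lookup_add smult_add_left sum.distrib)
  also have "\<dots> = msubst \<Psi> p + msubst \<Psi> q"
    by (subst (1 2) msubst_superset[of ?K]) auto
  finally show ?thesis .
qed

lemma msubst_sum: "msubst \<Psi> (\<Sum>i\<in>I. f i) = (\<Sum>i\<in>I. msubst \<Psi> (f i))"
  by (induction I rule: infinite_finite_induct) (auto simp: msubst_add)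

lemma msubst_single: "msubst \<Psi> (Poly_Mapping.single m c) = smult c (monom_eval \<Psi> m)"
  by (subst msubst_superset[of "{m}"]) (auto simp: lookup_single)

lemma mpoly_expand:
  "p = (\<Sum>m\<in>Poly_Mapping.keys p. Poly_Mapping.single m (Poly_Mapping.lookup p m))"
  by (rule poly_mapping_eqI) (auto simp: lookup_sum lookup_single when_def in_keys_iff
      intro: sum.neutral sum.delta' [THEN trans])

lemma mpoly_mult_expand:
  "p * q = (\<Sum>m\<in>Poly_Mapping.keys p. \<Sum>m'\<in>Poly_Mapping.keys q.
              Poly_Mapping.single (m + m') (Poly_Mapping.lookup p m * Poly_Mapping.lookup q m'))"
  by (subst (1 2) mpoly_expand) (simp add: sum_product mult_single)

lemma msubst_mult: "msubst \<Psi> (p * q) = msubst \<Psi> p * msubst \<Psi> q"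
proof -
  have "msubst \<Psi> (p * q) = (\<Sum>m\<in>Poly_Mapping.keys p. \<Sum>m'\<in>Poly_Mapping.keys q.
      smult (Poly_Mapping.lookup p m * Poly_Mapping.lookup q m') (monom_eval \<Psi> m * monom_eval \<Psi> m'))"
    by (simp add: mpoly_mult_expand[of p q] msubst_sum msubst_single monom_eval_add)
  also have "\<dots> = msubst \<Psi> p * msubst \<Psi> q"
    by (simp add: msubst_def monom_eval_def[symmetric] sum_product mult_ac)
  finally show ?thesis .
qed

lemma msubst_mconst [simp]: "msubst \<Psi> (mconst c) = [:c:]"
  by (simp add: mconst_def msubst_single monom_eval_def)

lemma msubst_mvar [simp]: "msubst \<Psi> (mvar v) = \<Psi> v"
  by (simp add: mvar_def msubst_single monom_eval_def)

lemma msubst_mconst_mult: "msubst \<Psi> (mconst c * p) = smult c (msubst \<Psi> p)"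
  by (simp add: msubst_mult)

lemma msubst_cong:
  assumes "\<And>m v. m \<in> Poly_Mapping.keys p \<Longrightarrow> v \<in> Poly_Mapping.keys m \<Longrightarrow> \<Psi> v = \<Psi>' v"
  shows "msubst \<Psi> p = msubst \<Psi>' p"
  unfolding msubst_def using assms by (intro sum.cong prod.cong refl) auto

lemma msubst_pcompose: "msubst (\<lambda>v. pcompose (\<Psi> v) q) p = pcompose (msubst \<Psi> p) q"
proof -
  have "pcompose (x ^ k) q = pcompose x q ^ k" for x :: "'a poly" and k
    by (induction k) (simp_all add: pcompose_1 pcompose_mult)
  thus ?thesis
    by (simp add: msubst_def pcompose_sum pcompose_smult pcompose_prod)
qed

definition total_degree :: "((nat \<times> nat) \<Rightarrow>\<^sub>0 nat) \<Rightarrow> nat" where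
  "total_degree m = (\<Sum>v\<in>Poly_Mapping.keys m. Poly_Mapping.lookup m v)"

lemma total_degree_add: "total_degree (m1 + m2) = total_degree m1 + total_degree m2"
proof -
  let ?K = "Poly_Mapping.keys m1 \<union> Poly_Mapping.keys m2"
  have sup: "total_degree m = (\<Sum>v\<in>?K. Poly_Mapping.lookup m v)" if "Poly_Mapping.keys m \<subseteq> ?K" for m
    unfolding total_degree_def using that by (intro sum.mono_neutral_left) (auto simp: in_keys_iff)
  show ?thesis
    using keys_add[of m1 m2] by (simp add: sup lookup_add sum.distrib)
qed

lemma degree_monom_eval_le:
  assumes "\<And>v. v \<in> Poly_Mapping.keys m \<Longrightarrow> degree (\<Psi> v) \<le> D"
  shows "degree (monom_eval \<Psi> m) \<le> total_degree m * D"
proof -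
  have "degree (monom_eval \<Psi> m) \<le> (\<Sum>v\<in>Poly_Mapping.keys m. degree (\<Psi> v ^ Poly_Mapping.lookup m v))"
    unfolding monom_eval_def using degree_prod_sum_le[of "Poly_Mapping.keys m"] by (simp add: o_def)
  also have "\<dots> \<le> (\<Sum>v\<in>Poly_Mapping.keys m. Poly_Mapping.lookup m v * D)"
    using assms by (intro sum_mono order_trans[OF degree_power_le]) (simp add: mult.commute)
  finally show ?thesis by (simp add: total_degree_def sum_distrib_right)
qed

lemma degree_msubst_le:
  assumes "\<And>m v. m \<in> Poly_Mapping.keys p \<Longrightarrow> v \<in> Poly_Mapping.keys m \<Longrightarrow> degree (\<Psi> v) \<le> D"
    and "\<And>m. m \<in> Poly_Mapping.keys p \<Longrightarrow> total_degree m \<le> s"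
  shows "degree (msubst \<Psi> p) \<le> s * D"
  unfolding msubst_def monom_eval_def[symmetric]
proof (rule degree_sum_le)
  fix m assume m: "m \<in> Poly_Mapping.keys p"
  have "degree (monom_eval \<Psi> m) \<le> total_degree m * D"
    using assms(1)[OF m] by (rule degree_monom_eval_le)
  also have "\<dots> \<le> s * D" using assms(2)[OF m] by simp
  finally show "degree (smult (Poly_Mapping.lookup p m) (monom_eval \<Psi> m)) \<le> s * D"
    using degree_smult_le order_trans by blast
qed simp

lemma lookup_mconst_mult: "Poly_Mapping.lookup (mconst c * p) m = c * Poly_Mapping.lookup p m"
  by (subst mpoly_expand[of p])
    (simp add: sum_distrib_left mconst_def mult_single lookup_sum lookup_single when_def in_keys_iff)

lemma coeff_msubst_sum_eq_lookup_sum: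
  "coeff (msubst \<Psi> (\<Sum>g\<in>G. mconst (c g * Poly_Mapping.lookup (p g) m) * q g)) k
    = Poly_Mapping.lookup (\<Sum>g\<in>G. mconst (c g * coeff (msubst \<Psi> (q g)) k) * p g) m"
  unfolding lookup_sum lookup_mconst_mult msubst_sum msubst_mconst_mult coeff_sum
  by (simp add: mult_ac)

lemma keys_mconst_mult: "Poly_Mapping.keys (mconst c * p) \<subseteq> Poly_Mapping.keys p"
  by (auto simp: in_keys_iff lookup_mconst_mult)

lemma mconst_0 [simp]: "mconst 0 = 0"
  by (simp add: mconst_def)

lemma mconst_1 [simp]: "mconst 1 = 1"
  by (simp add: mconst_def)

lemma mconst_add: "mconst (a + b) = mconst a + mconst b"
  by (simp add: mconst_def single_add)

lemma mconst_mult: "mconst (a * b) = mconst a * mconst b"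
  by (simp add: mconst_def mult_single)

lemma single_eq_single_iff:
  "a \<noteq> 0 \<Longrightarrow> Poly_Mapping.single v a = Poly_Mapping.single v' a \<longleftrightarrow> v = v'"
  by (metis lookup_single_eq lookup_single_not_eq)

lemma lookup_mult_disjoint_vars:
  fixes p q :: "'a::comm_ring_1 mpoly"
  assumes p: "\<And>m. m \<in> Poly_Mapping.keys p \<Longrightarrow> Poly_Mapping.keys m \<subseteq> VA"
    and q: "\<And>m. m \<in> Poly_Mapping.keys q \<Longrightarrow> Poly_Mapping.keys m \<subseteq> VB"
    and disj: "VA \<inter> VB = {}"
    and m1: "Poly_Mapping.keys m1 \<subseteq> VA" and m2: "Poly_Mapping.keys m2 \<subseteq> VB"
  shows "Poly_Mapping.lookup (p * q) (m1 + m2) = Poly_Mapping.lookup p m1 * Poly_Mapping.lookup q m2"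
proof -
  let ?P = "Poly_Mapping.keys p" and ?Q = "Poly_Mapping.keys q"
  have split_unique: "m = m1 \<and> m' = m2" if "m \<in> ?P" "m' \<in> ?Q" "m + m' = m1 + m2" for m m'
  proof -
    have km: "Poly_Mapping.keys m \<subseteq> VA" "Poly_Mapping.keys m' \<subseteq> VB" using p q that by auto
    have eq: "Poly_Mapping.lookup m v + Poly_Mapping.lookup m' v
        = Poly_Mapping.lookup m1 v + Poly_Mapping.lookup m2 v" for v
      using that(3) by (metis lookup_add)
    have z: "v \<notin> K \<Longrightarrow> Poly_Mapping.keys x \<subseteq> K \<Longrightarrow> Poly_Mapping.lookup x v = 0" for v x K
      by (auto simp: in_keys_iff)
    have "Poly_Mapping.lookup m v = Poly_Mapping.lookup m1 v \<and> Poly_Mapping.lookup m' v = Poly_Mapping.lookup m2 v" for v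
    proof (cases "v \<in> VA")
      case True
      hence "v \<notin> VB" using disj by blast
      thus ?thesis using eq[of v] z[of v VB m'] z[of v VB m2] km m2 by simp
    next
      case False
      thus ?thesis using eq[of v] z[of v VA m] z[of v VA m1] km m1 by simp
    qed
    thus ?thesis by (auto intro: poly_mapping_eqI)
  qed
  have "Poly_Mapping.lookup (p * q) (m1 + m2) = (\<Sum>m\<in>?P. \<Sum>m'\<in>?Q.
      if m + m' = m1 + m2 then Poly_Mapping.lookup p m * Poly_Mapping.lookup q m' else 0)"
    unfolding mpoly_mult_expand[of p q] by (simp add: lookup_sum lookup_single when_def eq_commute)
  also have "\<dots> = (\<Sum>m\<in>?P. if m = m1 then (\<Sum>m'\<in>?Q.
      if m' = m2 then Poly_Mapping.lookup p m * Poly_Mapping.lookup q m' else 0) else 0)"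
  proof (rule sum.cong[OF refl])
    fix m assume "m \<in> ?P"
    thus "(\<Sum>m'\<in>?Q. if m + m' = m1 + m2 then Poly_Mapping.lookup p m * Poly_Mapping.lookup q m' else 0) =
      (if m = m1 then (\<Sum>m'\<in>?Q. if m' = m2 then Poly_Mapping.lookup p m * Poly_Mapping.lookup q m' else 0) else 0)"
      using split_unique by (cases "m = m1") (auto intro!: sum.cong sum.neutral)
  qed
  also have "\<dots> = Poly_Mapping.lookup p m1 * Poly_Mapping.lookup q m2"
    by (cases "m1 \<in> ?P"; cases "m2 \<in> ?Q") (simp_all add: in_keys_iff)
  finally show ?thesis .
qed

lemma sum_mult_disjoint_vars_eq_0:
  fixes p q :: "'k \<Rightarrow> 'a::comm_ring_1 mpoly"
  assumes p: "\<And>g m. g \<in> G \<Longrightarrow> m \<in> Poly_Mapping.keys (p g) \<Longrightarrow> Poly_Mapping.keys m \<subseteq> VA"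
    and q: "\<And>g m. g \<in> G \<Longrightarrow> m \<in> Poly_Mapping.keys (q g) \<Longrightarrow> Poly_Mapping.keys m \<subseteq> VB"
    and disj: "VA \<inter> VB = {}"
    and partial: "\<And>m. (\<Sum>g\<in>G. mconst (c g * Poly_Mapping.lookup (p g) m) * q g) = 0"
  shows "(\<Sum>g\<in>G. mconst (c g) * (p g * q g)) = 0"
proof (rule poly_mapping_eqI)
  fix M
  have lookup: "Poly_Mapping.lookup (\<Sum>g\<in>G. mconst (c g) * (p g * q g)) M =
      (\<Sum>g\<in>G. c g * Poly_Mapping.lookup (p g * q g) M)"
    by (simp add: lookup_sum lookup_mconst_mult)
  show "Poly_Mapping.lookup (\<Sum>g\<in>G. mconst (c g) * (p g * q g)) M = Poly_Mapping.lookup 0 M"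
  proof (cases "\<exists>m1 m2. M = m1 + m2 \<and> Poly_Mapping.keys m1 \<subseteq> VA \<and> Poly_Mapping.keys m2 \<subseteq> VB")
    case True
    then obtain m1 m2 where M: "M = m1 + m2" "Poly_Mapping.keys m1 \<subseteq> VA" "Poly_Mapping.keys m2 \<subseteq> VB"
      by blast
    have "(\<Sum>g\<in>G. c g * Poly_Mapping.lookup (p g * q g) M)
        = Poly_Mapping.lookup (\<Sum>g\<in>G. mconst (c g * Poly_Mapping.lookup (p g) m1) * q g) m2"
      unfolding M(1) lookup_sum lookup_mconst_mult
      by (intro sum.cong refl) (simp add: lookup_mult_disjoint_vars[OF p q disj M(2,3)])
    thus ?thesis using lookup partial by simp
  next
    case False
    have "Poly_Mapping.lookup (p g * q g) M = 0" if "g \<in> G" for g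
    proof (rule ccontr)
      assume "Poly_Mapping.lookup (p g * q g) M \<noteq> 0"
      then obtain m1 m2 where "M = m1 + m2" "m1 \<in> Poly_Mapping.keys (p g)" "m2 \<in> Poly_Mapping.keys (q g)"
        using keys_mult[of "p g" "q g"] by (auto simp: in_keys_iff)
      thus False using False p[OF that] q[OF that] by blast
    qed
    thus ?thesis using lookup by simp
  qed
qed

section \<open>Sparse multiples of powers of \<open>x - 1\<close>\<close>

definition nonzero_coeffs :: "'a::zero poly \<Rightarrow> nat set" where
  "nonzero_coeffs f = {i. coeff f i \<noteq> 0}"

lemma nonzero_coeffs_subset: "nonzero_coeffs f \<subseteq> {..degree f}"
  by (auto simp: nonzero_coeffs_def intro: le_degree)

lemma finite_nonzero_coeffs [simp]: "finite (nonzero_coeffs f)"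
  using finite_subset[OF nonzero_coeffs_subset] by blast

lemma nonzero_coeffs_pCons_0: "nonzero_coeffs (pCons 0 g) = Suc ` nonzero_coeffs g"
proof (intro set_eqI iffI)
  fix i assume "i \<in> nonzero_coeffs (pCons 0 g)"
  thus "i \<in> Suc ` nonzero_coeffs g" by (cases i) (auto simp: nonzero_coeffs_def)
qed (auto simp: nonzero_coeffs_def)

lemma of_nat_neq_0_below_char:
  assumes "CHAR('a::comm_ring_1) = 0 \<or> k < CHAR('a)" "k > 0"
  shows "(of_nat k :: 'a) \<noteq> 0"
  using assms by (auto simp: of_nat_eq_0_iff_char_dvd dest: dvd_imp_le)

lemma coeff_pderiv_eq_0_iff:
  fixes f :: "'a::idom poly"
  assumes "CHAR('a) = 0 \<or> degree f < CHAR('a)"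
  shows "coeff (pderiv f) i = 0 \<longleftrightarrow> coeff f (Suc i) = 0"
proof -
  have "(of_nat (Suc i) :: 'a) \<noteq> 0" if "coeff f (Suc i) \<noteq> 0"
    using assms le_degree[OF that] by (intro of_nat_neq_0_below_char) auto
  thus ?thesis by (auto simp: coeff_pderiv)
qed

lemma card_nonzero_coeffs_pderiv:
  fixes f :: "'a::idom poly"
  assumes "coeff f 0 \<noteq> 0" "CHAR('a) = 0 \<or> degree f < CHAR('a)"
  shows "card (nonzero_coeffs f) = Suc (card (nonzero_coeffs (pderiv f)))"
proof -
  have "nonzero_coeffs f = insert 0 (Suc ` nonzero_coeffs (pderiv f))"
  proof (intro set_eqI iffI)
    fix i assume "i \<in> nonzero_coeffs f"
    thus "i \<in> insert 0 (Suc ` nonzero_coeffs (pderiv f))"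
      using assms(2) by (cases i) (auto simp: nonzero_coeffs_def coeff_pderiv_eq_0_iff)
  qed (use assms in \<open>auto simp: nonzero_coeffs_def coeff_pderiv_eq_0_iff\<close>)
  thus ?thesis by (simp add: card_image)
qed

lemma pderiv_eq_0_imp_degree_eq_0:
  fixes f :: "'a::idom poly"
  assumes "pderiv f = 0" "CHAR('a) = 0 \<or> degree f < CHAR('a)"
  shows "degree f = 0"
proof (rule ccontr)
  assume "degree f \<noteq> 0"
  then obtain k where k: "degree f = Suc k" using not0_implies_Suc by blast
  hence "coeff f (Suc k) \<noteq> 0" by (metis leading_coeff_0_iff nat.distinct(1) degree_0)
  hence "coeff (pderiv f) k \<noteq> 0" using assms(2) by (simp add: coeff_pderiv_eq_0_iff del: coeff_pderiv)
  thus False using assms(1) by simp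
qed

lemma degree_pderiv_less:
  fixes f :: "'a::idom poly"
  assumes "degree f > 0"
  shows "degree (pderiv f) < degree f"
proof -
  have "degree (pderiv f) \<le> degree f - 1"
    by (rule degree_le) (auto simp: coeff_pderiv coeff_eq_0)
  thus ?thesis using assms by simp
qed

lemma power_Suc_dvd_imp_power_dvd_pderiv:
  fixes f :: "'a::idom poly"
  assumes "[:-a, 1:] ^ Suc k dvd f"
  shows "[:-a, 1:] ^ k dvd pderiv f"
proof -
  obtain h where f: "f = [:-a, 1:] ^ Suc k * h" using assms by blast
  have "pderiv f = [:-a, 1:] ^ k * ([:-a, 1:] * pderiv h + smult (of_nat (Suc k)) h)"
    unfolding f pderiv_mult pderiv_power_Suc by (simp add: pderiv_pCons algebra_simps)
  thus ?thesis by simp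
qed

lemma power_linear_dvd_pCons_0:
  fixes g :: "'a::idom poly"
  assumes "a \<noteq> 0" "[:-a, 1:] ^ k dvd pCons 0 g"
  shows "[:-a, 1:] ^ k dvd g"
proof (cases "g = 0")
  case False
  have "order a (pCons 0 g) = order a [:0, 1:] + order a g"
    using False by (simp add: order_mult[symmetric])
  moreover have "order a [:0, 1::'a:] = 0"
    using assms(1) order_root[of "[:0, 1::'a:]" a] by auto
  ultimately show ?thesis using assms(2) False by (simp add: order_divides)
qed simp

text \<open>Induction on the degree: either a factor \<open>x\<close> splits off, or the derivative has one
  term fewer and is divisible by \<open>(x - 1)\<^bsup>w-1\<^esup>\<close>; below the characteristic only constants
  have zero derivative.\<close>

lemma sparse_multiple_eq_0:
  fixes f :: "'a::field poly"
  assumes "card (nonzero_coeffs f) \<le> w" "[:-1, 1:] ^ w dvd f"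
    and "CHAR('a) = 0 \<or> degree f < CHAR('a)"
  shows "f = 0"
  using assms
proof (induction "degree f" arbitrary: f w rule: less_induct)
  case less
  show ?case
  proof (rule ccontr)
    assume f: "f \<noteq> 0"
    show False
    proof (cases "coeff f 0 = 0")
      case True
      then obtain g where g: "f = pCons 0 g" by (metis pCons_cases coeff_pCons_0)
      with f have "g \<noteq> 0" "degree g < degree f" by auto
      moreover have "card (nonzero_coeffs g) \<le> w"
        using less.prems(1) by (simp add: g nonzero_coeffs_pCons_0 card_image)
      moreover have "[:-1, 1:] ^ w dvd g"
        using less.prems(2) g power_linear_dvd_pCons_0[of 1] by simp
      ultimately show False using less.hyps less.prems(3) by fastforce
    next
      case False
      have card: "card (nonzero_coeffs f) = Suc (card (nonzero_coeffs (pderiv f)))"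
        using False less.prems(3) by (rule card_nonzero_coeffs_pderiv)
      then obtain w' where w: "w = Suc w'" using less.prems(1) by (cases w) auto
      have "degree ([:-1, 1:] ^ w :: 'a poly) \<le> degree f"
        using less.prems(2) f by (rule dvd_imp_degree_le)
      hence "w \<le> degree f" by (simp add: degree_power_eq)
      hence "degree f > 0" using w by simp
      hence "degree (pderiv f) < degree f" by (rule degree_pderiv_less)
      moreover have "[:-1, 1:] ^ w' dvd pderiv f"
        using less.prems(2) w by (intro power_Suc_dvd_imp_power_dvd_pderiv) simp
      ultimately have "pderiv f = 0"
        using less.hyps less.prems card w by force
      thus False
        using pderiv_eq_0_imp_degree_eq_0 less.prems(3) \<open>degree f > 0\<close> by fastforce
    qed
  qed
qed

section \<open>Bivariate polynomials\<close>

lemma map_poly_hom_add: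
  fixes h :: "'a::comm_ring_1 \<Rightarrow> 'b::comm_ring_1"
  assumes "\<And>a b. h (a + b) = h a + h b"
  shows "map_poly h (p + q) = map_poly h p + map_poly h q"
proof -
  have "h 0 = 0" using assms[of 0 0] by simp
  thus ?thesis by (intro poly_eqI) (simp add: coeff_map_poly assms)
qed

lemma map_poly_hom_mult:
  fixes h :: "'a::comm_ring_1 \<Rightarrow> 'b::comm_ring_1"
  assumes add: "\<And>a b. h (a + b) = h a + h b" and mult: "\<And>a b. h (a * b) = h a * h b"
  shows "map_poly h (p * q) = map_poly h p * map_poly h q"
proof (induction p)
  case (pCons a p)
  have h0: "h 0 = 0" using add[of 0 0] by simp
  have smult: "map_poly h (smult a q) = smult (h a) (map_poly h q)"
    by (intro poly_eqI) (simp add: coeff_map_poly h0 mult)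
  show ?case
    by (simp add: map_poly_hom_add[OF add] smult map_poly_pCons h0 pCons.IH)
qed simp

lemma map_poly_hom_pcompose:
  fixes h :: "'a::comm_ring_1 \<Rightarrow> 'b::comm_ring_1"
  assumes add: "\<And>a b. h (a + b) = h a + h b" and mult: "\<And>a b. h (a * b) = h a * h b"
  shows "map_poly h (pcompose p q) = pcompose (map_poly h p) (map_poly h q)"
proof -
  have "h 0 = 0" using add[of 0 0] by simp
  thus ?thesis
    by (induction p) (simp_all add: pcompose_pCons map_poly_hom_add[OF add]
        map_poly_hom_mult[OF add mult] map_poly_pCons)
qed

text \<open>A bivariate polynomial is a polynomial in an outer variable \<open>y\<close> whose
  coefficients are polynomials in \<open>x\<close>; \<open>poly2 P u v\<close> is \<open>P(u, v)\<close>.\<close>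

definition poly2 :: "'a::comm_ring_1 poly poly \<Rightarrow> 'a poly \<Rightarrow> 'a poly \<Rightarrow> 'a poly" where
  "poly2 P u v = poly (map_poly (\<lambda>q. pcompose q u) P) v"

abbreviation lift_poly :: "'a::comm_ring_1 poly \<Rightarrow> 'a poly poly" where
  "lift_poly \<equiv> map_poly (\<lambda>c. [:c:])"

lemma poly2_0 [simp]: "poly2 0 u v = 0"
  by (simp add: poly2_def)

lemma poly2_1 [simp]: "poly2 1 u v = 1"
  by (simp add: poly2_def pcompose_1)

lemma poly2_add: "poly2 (P + Q) u v = poly2 P u v + poly2 Q u v"
  unfolding poly2_def by (simp add: map_poly_hom_add pcompose_add)

lemma poly2_mult: "poly2 (P * Q) u v = poly2 P u v * poly2 Q u v"
  unfolding poly2_def by (simp add: map_poly_hom_mult pcompose_add pcompose_mult)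

lemma poly2_diff: "poly2 (P - Q) u v = poly2 P u v - poly2 Q u v"
  using poly2_add[of "P - Q" Q] by (simp add: algebra_simps)

lemma poly2_power: "poly2 (P ^ k) u v = poly2 P u v ^ k"
  by (induction k) (simp_all add: poly2_mult)

lemma poly2_sum: "poly2 (sum f A) u v = (\<Sum>x\<in>A. poly2 (f x) u v)"
  by (induction A rule: infinite_finite_induct) (simp_all add: poly2_add)

lemma poly2_const: "poly2 [:q:] u v = pcompose q u"
  unfolding poly2_def by (simp add: map_poly_pCons)

lemma poly2_lift: "poly2 (lift_poly q) u v = pcompose q v"
  unfolding poly2_def by (simp add: map_poly_map_poly o_def) (simp add: pcompose_altdef)

lemma poly2_shift: "poly2 (pcompose P [:[:0, 1:], 1:]) u v = poly2 P u (u + v)"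
proof -
  have "map_poly (\<lambda>q. pcompose q u) (pcompose P [:[:0, 1:], 1:])
      = pcompose (map_poly (\<lambda>q. pcompose q u) P) [:u, 1:]"
    by (subst map_poly_hom_pcompose)
      (simp_all add: pcompose_add pcompose_mult map_poly_pCons pcompose_pCons pcompose_1)
  thus ?thesis unfolding poly2_def by (simp add: poly_pcompose)
qed

lemma coeff_pcompose_monom:
  fixes c :: "'a::comm_semiring_1 poly"
  assumes "w > 0"
  shows "coeff (pcompose c (monom 1 w)) k = (if w dvd k then coeff c (k div w) else 0)"
proof (induction c arbitrary: k)
  case (pCons a c)
  have "coeff (pcompose (pCons a c) (monom 1 w)) k
        = coeff [:a:] k + (if k < w then 0 else coeff (pcompose c (monom 1 w)) (k - w))"
    unfolding pcompose_pCons coeff_add coeff_monom_mult by (simp only: mult.left_neutral)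
  also have "\<dots> = (if w dvd k then coeff (pCons a c) (k div w) else 0)"
  proof (cases "k < w")
    case True
    thus ?thesis using assms
      by (cases "k = 0") (auto dest: dvd_imp_le simp: coeff_pCons split: nat.splits)
  next
    case False
    hence "w dvd (k - w) \<longleftrightarrow> w dvd k" "(k - w) div w = k div w - 1"
      using assms by (simp_all add: dvd_minus_self le_div_geq)
    moreover have "w dvd k \<Longrightarrow> k div w > 0" using False assms by auto
    ultimately show ?thesis using False assms pCons.IH[of "k - w"]
      by (auto simp: coeff_pCons split: nat.splits)
  qed
  finally show ?case .
qed simp

lemma eq_if_dvd_exponent_diff:
  fixes w e j j' :: nat
  assumes "j < w" "j' < w" "(w - 1) * j \<le> w * e + (w - 1) * j'"
    and "w dvd (w * e + (w - 1) * j' - (w - 1) * j)"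
  shows "j = j'"
proof -
  define D where "D = w * e + (w - 1) * j' - (w - 1) * j"
  have "int D = int w * int e + (int w - 1) * int j' - (int w - 1) * int j"
    using assms(1,3) unfolding D_def by (simp add: of_nat_diff)
  hence "int D = int w * (int e + int j' - int j) + (int j - int j')"
    by (simp add: algebra_simps)
  moreover have "int w dvd int D" using assms(4) unfolding D_def by simp
  ultimately have "int w dvd (int j - int j')"
    by (metis dvd_add_right_iff dvd_triv_left)
  moreover have "\<bar>int j - int j'\<bar> < int w" using assms(1,2) by auto
  ultimately have "int j - int j' = 0"
    by (metis dvd_imp_le_int abs_of_nat not_le)
  thus ?thesis by simp
qed

lemma poly2_monom_monom:
  fixes R :: "'a::comm_ring_1 poly poly"
  assumes "R = 0 \<or> degree R < w"
  shows "poly2 R (monom 1 w) (monom 1 (w - 1)) =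
    (\<Sum>j<w. monom 1 ((w - 1) * j) * pcompose (coeff R j) (monom 1 w))"
proof -
  let ?R = "map_poly (\<lambda>q. pcompose q (monom 1 w)) R"
  have "degree ?R \<le> degree R" by (rule map_poly_degree_leq)
  hence "poly ?R (monom 1 (w - 1)) = (\<Sum>j<w. coeff ?R j * monom 1 (w - 1) ^ j)"
    using assms unfolding poly_altdef
    by (intro sum.mono_neutral_cong) (auto simp: coeff_eq_0 coeff_map_poly)
  thus ?thesis unfolding poly2_def by (simp add: coeff_map_poly monom_power mult.commute)
qed

text \<open>For \<open>j < w\<close> the monomials \<open>x\<^sup>e y\<^sup>j\<close> go to the distinct powers \<open>t\<^bsup>we + (w-1)j\<^esup>\<close>,
  since the exponent determines \<open>j\<close> modulo \<open>w\<close>.\<close>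

lemma poly2_monom_eq_0_imp_eq_0:
  fixes R :: "'a::comm_ring_1 poly poly"
  assumes w: "w > 0" and deg: "R = 0 \<or> degree R < w"
    and vanish: "poly2 R (monom 1 w) (monom 1 (w - 1)) = 0"
  shows "R = 0"
proof -
  note expand = poly2_monom_monom[OF deg]
  show ?thesis
  proof (rule poly_eqI)
    fix j'
    show "coeff R j' = coeff 0 j'"
    proof (cases "j' < w")
      case False thus ?thesis using deg by (auto simp: coeff_eq_0)
    next
      case True
      show ?thesis
      proof (rule poly_eqI)
        fix e
        define k where "k = w * e + (w - 1) * j'"
        have "0 = coeff (\<Sum>j<w. monom 1 ((w - 1) * j) * pcompose (coeff R j) (monom 1 w)) k"
          using vanish expand by simp
        also have "\<dots> = (\<Sum>j<w. if j = j' then coeff (coeff R j) e else 0)"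
          unfolding coeff_sum coeff_monom_mult mult_1 coeff_pcompose_monom[OF w]
        proof (intro sum.cong refl)
          fix j assume "j \<in> {..<w}"
          thus "(if k < (w - 1) * j then 0 else if w dvd k - (w - 1) * j
                   then coeff (coeff R j) ((k - (w - 1) * j) div w) else 0)
              = (if j = j' then coeff (coeff R j) e else 0)"
            using eq_if_dvd_exponent_diff[of j w j' e] True w by (auto simp: k_def)
        qed
        also have "\<dots> = coeff (coeff R j') e" using True by simp
        finally show "coeff (coeff R j') e = coeff (coeff 0 j') e" by simp
      qed
    qed
  qed
qed

interpretation poly_vs: vector_space "smult :: 'a::field \<Rightarrow> 'a poly \<Rightarrow> 'a poly"
  by unfold_locales (simp_all add: smult_add_right smult_add_left)

lemma independent_if_distinct_degrees:
  fixes S :: "'a::field poly set"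
  assumes "0 \<notin> S" "inj_on degree S"
  shows "poly_vs.independent S"
  unfolding poly_vs.independent_explicit_finite_subsets
proof (intro allI impI ballI; rule ccontr)
  fix T u v
  assume T: "T \<subseteq> S" "finite T" and sum0: "(\<Sum>v\<in>T. smult (u v) v) = 0"
    and v: "v \<in> T" and uv: "u v \<noteq> 0"
  define T' where "T' = {v\<in>T. u v \<noteq> 0}"
  have T': "finite T'" "T' \<noteq> {}" using T v uv unfolding T'_def by auto
  have "Max (degree ` T') \<in> degree ` T'" using T' by (intro Max_in) auto
  then obtain v0 where v0: "v0 \<in> T'" "degree v0 = Max (degree ` T')" by auto
  have other: "u x * coeff x (degree v0) = 0" if "x \<in> T - {v0}" for x
  proof (cases "u x = 0")
    case False
    hence "x \<in> T'" using that unfolding T'_def by auto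
    hence "degree x \<le> degree v0" using v0(2) T' by simp
    moreover have "degree x \<noteq> degree v0"
      using inj_onD[OF assms(2)] that v0(1) T(1) unfolding T'_def by blast
    ultimately have "degree x < degree v0" by simp
    thus ?thesis by (simp add: coeff_eq_0)
  qed simp
  have "0 = coeff (\<Sum>v\<in>T. smult (u v) v) (degree v0)" using sum0 by simp
  also have "\<dots> = u v0 * lead_coeff v0 + (\<Sum>x\<in>T - {v0}. u x * coeff x (degree v0))"
    using T v0 unfolding T'_def by (simp add: coeff_sum sum.remove[of T v0])
  also have "\<dots> = u v0 * lead_coeff v0" using other by (simp add: sum.neutral)
  finally have "u v0 * lead_coeff v0 = 0" by simp
  moreover have "v0 \<noteq> 0" using assms(1) v0(1) T(1) unfolding T'_def by auto
  ultimately show False using v0(1) unfolding T'_def by simp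
qed

text \<open>\<open>homog F\<close> is \<open>F(z, xz)\<close> as a polynomial in the outer variable \<open>z\<close>: the coefficient
  of \<open>z\<^sup>N\<close> is \<open>F\<^sub>N(1, x)\<close>, where \<open>F\<^sub>N\<close> is the part of \<open>F\<close> of total degree \<open>N\<close>.\<close>

definition homog :: "'a::comm_ring_1 poly poly \<Rightarrow> 'a poly poly" where
  "homog F = poly (map_poly lift_poly F) [:0, [:0, 1:]:]"

lemma lift_poly_add: "lift_poly (p + q) = lift_poly p + lift_poly q"
  by (rule map_poly_hom_add) simp

lemma lift_poly_mult: "lift_poly (p * q) = lift_poly p * lift_poly q"
  by (rule map_poly_hom_mult) simp_all

lemma homog_0 [simp]: "homog 0 = 0"
  by (simp add: homog_def)

lemma homog_pCons: "homog (pCons q F) = lift_poly q + [:0, [:0, 1:]:] * homog F"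
  unfolding homog_def by (simp add: map_poly_pCons)

lemma homog_mult: "homog (F * G) = homog F * homog G"
  unfolding homog_def by (simp add: map_poly_hom_mult lift_poly_add lift_poly_mult)

lemma homog_add: "homog (F + G) = homog F + homog G"
  unfolding homog_def by (simp add: map_poly_hom_add lift_poly_add)

lemma homog_diff: "homog (F - G) = homog F - homog G"
  using homog_add[of "F - G" G] by simp

lemma homog_1 [simp]: "homog 1 = 1"
  by (simp add: homog_def)

lemma homog_power: "homog (F ^ k) = homog F ^ k"
  by (induction k) (simp_all add: homog_mult)

lemma coeff_homog:
  "coeff (coeff (homog F) N) b = (if b \<le> N then coeff (coeff F b) (N - b) else 0)"
proof (induction F arbitrary: N b)
  case (pCons q F)
  have "coeff (coeff (lift_poly q) N) b = (if b = 0 then coeff q N else 0)"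
    by (simp add: coeff_map_poly coeff_pCons split: nat.splits)
  moreover have "coeff (coeff ([:0, [:0, 1:]:] * homog F) N) b =
      (if N = 0 \<or> b = 0 then 0 else coeff (coeff (homog F) (N - 1)) (b - 1))"
    by (cases N; cases b) (simp_all add: coeff_pCons)
  ultimately show ?case
    unfolding homog_pCons coeff_add by (cases N; cases b) (simp_all add: pCons.IH coeff_pCons)
qed simp

lemma homog_eq_0_iff: "homog F = 0 \<longleftrightarrow> F = 0"
proof
  assume "homog F = 0"
  hence "coeff (coeff F b) a = 0" for a b
    using coeff_homog[of F "a + b" b] by simp
  thus "F = 0" by (metis coeff_0 poly_eqI)
qed simp

text \<open>\<open>(y - x)\<^sup>w - x\<^bsup>w-1\<^esup>\<close>, monic in \<open>y\<close> and vanishing at \<open>(t\<^sup>w, t\<^sup>w + t\<^bsup>w-1\<^esup>)\<close>.\<close>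

definition vanishing_poly :: "nat \<Rightarrow> 'a::comm_ring_1 poly poly" where
  "vanishing_poly w = [:-[:0, 1:], 1:] ^ w - [:[:0, 1:] ^ (w - 1):]"

lemma
  assumes "w \<ge> 1"
  shows degree_vanishing_poly: "degree (vanishing_poly w :: 'a::idom poly poly) = w"
    and lead_coeff_vanishing_poly: "lead_coeff (vanishing_poly w :: 'a::idom poly poly) = 1"
proof -
  have deg1: "degree ([:-[:0, 1:], 1:] :: 'a poly poly) = 1" by simp
  have lc1: "lead_coeff ([:-[:0, 1:], 1:] :: 'a poly poly) = 1" by (subst deg1) simp
  have degw: "degree ([:-[:0, 1:], 1:] ^ w :: 'a poly poly) = w"
    by (subst degree_power_eq) (use deg1 in auto)
  have lcw: "lead_coeff ([:-[:0, 1:], 1:] ^ w :: 'a poly poly) = 1"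
    by (simp only: lead_coeff_power lc1) simp
  have split: "vanishing_poly w = [:-[:0, 1:], 1:] ^ w + [:-([:0, 1:] ^ (w - 1)):]"
    unfolding vanishing_poly_def by simp
  show deg: "degree (vanishing_poly w :: 'a poly poly) = w"
    unfolding split using degw assms by (subst degree_add_eq_left) auto
  show "lead_coeff (vanishing_poly w :: 'a poly poly) = 1"
    unfolding deg using lcw degw assms unfolding vanishing_poly_def
    by (auto simp: coeff_pCons split: nat.splits)
qed

lemma monom_1_eq_power_x: "monom 1 n = ([:0, 1:] ^ n :: 'a::comm_semiring_1 poly)"
  by (simp add: monom_altdef)

lemma poly2_vanishing_poly:
  "poly2 (vanishing_poly w) (monom 1 w) (monom 1 w + monom 1 (w - 1)) = (0 :: 'a::comm_ring_1 poly)"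
proof -
  let ?u = "monom 1 w :: 'a poly" and ?v = "monom 1 w + monom 1 (w - 1) :: 'a poly"
  have "poly2 [:-[:0, 1:], 1:] ?u ?v = monom 1 (w - 1)"
    unfolding poly2_def by (simp add: map_poly_pCons pcompose_pCons pcompose_1)
  moreover have "pcompose ([:0, 1:] ^ k) q = q ^ k" for k and q :: "'a poly"
    by (induction k) (simp_all add: pcompose_mult pcompose_1 pcompose_pCons)
  hence "poly2 [:[:0, 1:] ^ (w - 1):] ?u ?v = monom 1 (w * (w - 1))"
    by (simp add: poly2_const monom_power)
  ultimately show ?thesis
    unfolding vanishing_poly_def poly2_diff poly2_power by (simp add: monom_power mult.commute)
qed

lemma homog_vanishing_poly:
  "homog (vanishing_poly w) = monom ([:-1, 1:] ^ w) w - monom (1 :: 'a::comm_ring_1 poly) (w - 1)"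
proof -
  have "[:-1:] = (-1 :: 'a poly)"
    by (rule poly_eqI) (simp add: coeff_pCons split: nat.split)
  hence "lift_poly (-[:0, 1::'a:]) = [:0, -1:]"
    by (intro poly_eqI) (simp add: coeff_map_poly coeff_pCons split: nat.split)
  moreover have "homog [:1::'a poly:] = 1" by (simp flip: one_pCons)
  ultimately have "homog [:-[:0, 1:], 1::'a poly:] = [:0, -1:] + [:0, [:0, 1:]:]"
    by (subst homog_pCons) simp
  also have "\<dots> = monom [:-1, 1:] 1"
    by (simp add: monom_Suc monom_0 one_pCons)
  finally have "homog [:-[:0, 1:], 1::'a poly:] = monom [:-1, 1:] 1" .
  moreover have "homog [:[:0, 1::'a:] ^ (w - 1):] = monom 1 (w - 1)"
    by (simp add: homog_pCons map_poly_monom one_pCons flip: monom_1_eq_power_x)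
  ultimately show ?thesis
    unfolding vanishing_poly_def homog_diff homog_power by (simp add: monom_power)
qed

lemma vanishing_poly_dvd:
  fixes P :: "'a::idom poly poly"
  assumes w: "w \<ge> 1" and vanish: "poly2 P (monom 1 w) (monom 1 w + monom 1 (w - 1)) = 0"
  shows "vanishing_poly w dvd P"
proof -
  let ?G = "vanishing_poly w :: 'a poly poly"
  have G: "?G \<noteq> 0" using lead_coeff_vanishing_poly[OF w] by (metis leading_coeff_0_iff one_neq_zero)
  obtain Q R where qr: "pseudo_divmod P ?G = (Q, R)" by (cases "pseudo_divmod P ?G") auto
  have P: "P = ?G * Q + R"
    using pseudo_divmod(1)[OF G qr] unfolding lead_coeff_vanishing_poly[OF w] by simp
  have deg: "R = 0 \<or> degree R < w"
    using pseudo_divmod(2)[OF G qr] unfolding degree_vanishing_poly[OF w] .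
  define R' where "R' = pcompose R [:[:0, 1:], 1:]"
  have "poly2 R (monom 1 w) (monom 1 w + monom 1 (w - 1)) = 0"
    using vanish unfolding P poly2_add poly2_mult poly2_vanishing_poly by simp
  hence "poly2 R' (monom 1 w) (monom 1 (w - 1)) = 0" by (simp add: R'_def poly2_shift)
  moreover have "R' = 0 \<or> degree R' < w" using deg by (auto simp: R'_def degree_pcompose)
  ultimately have "R' = 0" using w by (intro poly2_monom_eq_0_imp_eq_0[of w R']) auto
  hence "R = 0" unfolding R'_def by (rule pcompose_eq_0) simp
  thus ?thesis using P by simp
qed

lemma lead_coeff_homog_vanishing_poly:
  assumes "w \<ge> 1"
  shows "lead_coeff (homog (vanishing_poly w)) = ([:-1, 1:] ^ w :: 'a::idom poly)"
proof -
  let ?H = "homog (vanishing_poly w) :: 'a poly poly"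
  have "coeff ?H n = (if n = w then [:-1, 1:] ^ w else 0) - (if n = w - 1 then 1 else 0)" for n
    by (simp add: homog_vanishing_poly)
  hence "coeff ?H w = [:-1, 1:] ^ w" "\<forall>n>w. coeff ?H n = 0" using assms by auto
  moreover have "degree ?H = w"
    using calculation by (intro antisym degree_le le_degree) auto
  ultimately show ?thesis by simp
qed

lemma power_dvd_lead_coeff_homog:
  fixes P :: "'a::idom poly poly"
  assumes "w \<ge> 1" "vanishing_poly w dvd P"
  shows "[:-1, 1:] ^ w dvd lead_coeff (homog P)"
proof -
  obtain Q where "P = vanishing_poly w * Q" using assms(2) by blast
  hence "lead_coeff (homog P) = [:-1, 1:] ^ w * lead_coeff (homog Q)"
    by (simp add: homog_mult lead_coeff_mult lead_coeff_homog_vanishing_poly[OF assms(1)])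
  thus ?thesis by simp
qed

lemma coeff_lead_coeff_homog_neq_0_imp:
  assumes "coeff (lead_coeff (homog P)) b \<noteq> 0"
  shows "b \<le> degree (homog P)" "degree (coeff P b) = degree (homog P) - b"
proof -
  let ?N = "degree (homog P)"
  show b: "b \<le> ?N" using assms by (simp add: coeff_homog split: if_splits)
  have "coeff (coeff P b) (?N - b) \<noteq> 0" using assms by (simp add: coeff_homog split: if_splits)
  moreover have "coeff (coeff P b) a = 0" if "a > ?N - b" for a
    using coeff_homog[of P "a + b" b] that b by (simp add: coeff_eq_0)
  ultimately show "degree (coeff P b) = ?N - b"
    by (intro antisym degree_le le_degree) auto
qed

text \<open>The coefficients of the leading form of \<open>P\<close> come from coefficients of \<open>P\<close> of
  pairwise distinct degrees, which are linearly independent.\<close>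

lemma card_nonzero_coeffs_lead_coeff_homog_le:
  fixes P :: "'a::field poly poly"
  assumes "finite A" "\<And>b. coeff P b \<in> poly_vs.span A"
  shows "card (nonzero_coeffs (lead_coeff (homog P))) \<le> card A"
proof -
  define B where "B = nonzero_coeffs (lead_coeff (homog P))"
  have B: "b \<le> degree (homog P)" "degree (coeff P b) = degree (homog P) - b" if "b \<in> B" for b
    using that coeff_lead_coeff_homog_neq_0_imp[of P b] by (auto simp: B_def nonzero_coeffs_def)
  have eq: "b = b'" if "b \<in> B" "b' \<in> B" "degree (coeff P b) = degree (coeff P b')" for b b'
    using B[OF that(1)] B[OF that(2)] that(3) by simp
  have inj: "inj_on (coeff P) B" using eq by (auto intro: inj_onI)
  have "poly_vs.independent (coeff P ` B)"
  proof (rule independent_if_distinct_degrees)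
    show "0 \<notin> coeff P ` B"
      by (force simp: B_def nonzero_coeffs_def coeff_homog split: if_splits)
    show "inj_on degree (coeff P ` B)" using eq by (auto intro: inj_onI)
  qed
  moreover have "coeff P ` B \<subseteq> poly_vs.span A" using assms(2) by auto
  ultimately have "card (coeff P ` B) \<le> card A"
    using poly_vs.independent_span_bound[OF assms(1)] by blast
  thus ?thesis using inj by (simp add: B_def card_image)
qed

lemma degree_lead_coeff_homog_le: "degree (lead_coeff (homog P)) \<le> degree P"
proof (cases "lead_coeff (homog P) = 0")
  case False
  let ?b = "degree (lead_coeff (homog P))"
  have "coeff (lead_coeff (homog P)) ?b \<noteq> 0" using False by simp
  hence "?b \<le> degree (homog P)" "coeff (coeff P ?b) (degree (homog P) - ?b) \<noteq> 0"
    by (simp_all add: coeff_homog split: if_splits)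
  hence "coeff P ?b \<noteq> 0" by auto
  thus ?thesis by (rule le_degree)
qed simp

lemma low_rank_poly2_eq_0_imp_eq_0:
  fixes P :: "'a::field poly poly"
  assumes w: "w \<ge> 1" and A: "finite A" "card A \<le> w" "\<And>b. coeff P b \<in> poly_vs.span A"
    and char: "CHAR('a) = 0 \<or> degree P < CHAR('a)"
    and vanish: "poly2 P (monom 1 w) (monom 1 w + monom 1 (w - 1)) = 0"
  shows "P = 0"
proof -
  have "lead_coeff (homog P) = 0"
  proof (rule sparse_multiple_eq_0)
    show "card (nonzero_coeffs (lead_coeff (homog P))) \<le> w"
      using card_nonzero_coeffs_lead_coeff_homog_le[OF A(1,3)] A(2) by simp
    show "[:-1, 1:] ^ w dvd lead_coeff (homog P)"
      using w vanish by (intro power_dvd_lead_coeff_homog vanishing_poly_dvd)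
    show "CHAR('a) = 0 \<or> degree (lead_coeff (homog P)) < CHAR('a)"
      using char degree_lead_coeff_homog_le[of P] by auto
  qed
  thus ?thesis by (simp add: homog_eq_0_iff)
qed

text \<open>The conclusion says that \<open>\<Sum>\<^sub>g c\<^sub>g X\<^sub>g(x) Y\<^sub>g(y)\<close> vanishes as a bivariate polynomial.\<close>

lemma tensor_sum_eq_0_if_Phi_sum_eq_0:
  fixes X Y :: "'k \<Rightarrow> 'a::field poly"
  assumes w: "w \<ge> 1" and G: "finite G" "card G \<le> w"
    and D: "\<And>g. g \<in> G \<Longrightarrow> degree (Y g) \<le> D" "CHAR('a) = 0 \<or> D < CHAR('a)"
    and vanish: "(\<Sum>g\<in>G. smult (c g) (Phi w L (X g) * Phi w R (Y g))) = 0"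
  shows "(\<Sum>g\<in>G. smult (c g * coeff (Y g) k) (X g)) = 0"
proof -
  define P where "P = (\<Sum>g\<in>G. [:smult (c g) (X g):] * lift_poly (Y g))"
  have coeff_P: "coeff P k = (\<Sum>g\<in>G. smult (c g * coeff (Y g) k) (X g))" for k
    unfolding P_def by (simp add: coeff_sum coeff_map_poly mult.commute)
  have "P = 0"
  proof (rule low_rank_poly2_eq_0_imp_eq_0[OF w])
    show "finite (X ` G)" "card (X ` G) \<le> w" using G card_image_le[OF G(1), of X] by auto
    show "coeff P k \<in> poly_vs.span (X ` G)" for k
      unfolding coeff_P by (intro poly_vs.span_sum poly_vs.span_scale poly_vs.span_base) auto
    have "degree P \<le> D"
      unfolding P_def using D(1) G(1)
      by (intro degree_sum_le order_trans[OF degree_mult_le]) (auto simp: degree_map_poly)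
    thus "CHAR('a) = 0 \<or> degree P < CHAR('a)" using D(2) by auto
    show "poly2 P (monom 1 w) (monom 1 w + monom 1 (w - 1)) = 0"
      using vanish unfolding P_def poly2_sum poly2_mult poly2_const poly2_lift
      by (simp add: pcompose_smult Phi_def)
  qed
  thus ?thesis using coeff_P by simp
qed

lemma length_vals [simp]: "length (vals C g) = g"
  by (induction g) auto

lemma nth_vals: "k < g \<Longrightarrow> vals C g ! k = circ_val C k"
  by (induction g) (auto simp: nth_append circ_val_def less_Suc_eq)

lemma getv_vals: "k < g \<Longrightarrow> getv (vals C g) k = circ_val C k"
  by (simp add: getv_def nth_vals)

lemma circ_val_eq_gate_val: "circ_val C g = gate_val C (vals C g) g"
  by (simp add: circ_val_def nth_append)

definition vars :: "nat \<Rightarrow> nat set \<Rightarrow> (nat \<times> nat) set" where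
  "vars n I = {v. fst v \<in> I \<and> snd v \<in> {1..n}}"

locale sml_circuit =
  fixes C :: "nat \<Rightarrow> 'a::field gate" and N :: nat and S :: "nat \<Rightarrow> nat set" and d n rt :: nat
  assumes wf: "circuit_wf C N" and sml: "set_multilinear C N S d n rt"
begin

abbreviation f :: "nat \<Rightarrow> 'a mpoly" where "f g \<equiv> circ_val C g"

lemma Add_child_less: "g < N \<Longrightarrow> C g = Add cs \<Longrightarrow> (c, k) \<in> set cs \<Longrightarrow> k < g"
  using wf unfolding circuit_wf_def by fastforce

lemma Mul_children_less: "g < N \<Longrightarrow> C g = Mul a b \<Longrightarrow> a < g \<and> b < g"
  using wf unfolding circuit_wf_def by fastforce

lemma circ_val_Inp: "C g = Inp i j \<Longrightarrow> f g = mvar (i, j)"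
  by (simp add: circ_val_eq_gate_val gate_val_def)

lemma circ_val_Add: "g < N \<Longrightarrow> C g = Add cs \<Longrightarrow> f g = (\<Sum>(c, k)\<leftarrow>cs. mconst c * f k)"
  by (auto simp: circ_val_eq_gate_val gate_val_def getv_vals Add_child_less intro!: arg_cong[of _ _ sum_list])

lemma circ_val_Mul: "g < N \<Longrightarrow> C g = Mul a b \<Longrightarrow> f g = f a * f b"
  by (simp add: circ_val_eq_gate_val gate_val_def getv_vals Mul_children_less)

lemma label_subset: "g < N \<Longrightarrow> S g \<subseteq> {1..d}"
  using sml unfolding set_multilinear_def by blast

lemma label_Inp: "g < N \<Longrightarrow> C g = Inp i j \<Longrightarrow> 1 \<le> i \<and> i \<le> d \<and> 1 \<le> j \<and> j \<le> n \<and> S g = {i}"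
  using sml unfolding set_multilinear_def by force

lemma label_Add: "g < N \<Longrightarrow> C g = Add cs \<Longrightarrow> (c, k) \<in> set cs \<Longrightarrow> S k = S g"
  using sml unfolding set_multilinear_def by force

lemma label_Mul: "g < N \<Longrightarrow> C g = Mul a b \<Longrightarrow> S a \<inter> S b = {} \<and> S g = S a \<union> S b"
  using sml unfolding set_multilinear_def by force

lemma circ_val_eq_0_if_no_ptree: "g < N \<Longrightarrow> \<nexists>t. is_ptree C g t \<Longrightarrow> f g = 0"
proof (induction g rule: less_induct)
  case (less g)
  show ?case
  proof (cases "C g")
    case (Inp i j) thus ?thesis using less.prems is_ptree.inp by blast
  next
    case (Add cs)
    have "mconst c * f k = 0" if "(c, k) \<in> set cs" for c k
    proof -
      have "\<nexists>t. is_ptree C k t" using less.prems(2) is_ptree.add[of C g cs c k, OF Add that] by blast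
      thus ?thesis using less.IH Add_child_less[OF less.prems(1) Add that] less.prems(1) by simp
    qed
    hence "(\<Sum>(c, k)\<leftarrow>cs. mconst c * f k) = 0" by (induction cs) auto
    thus ?thesis using circ_val_Add[OF less.prems(1) Add] by simp
  next
    case (Mul a b)
    have lt: "a < g" "b < g" using Mul_children_less[OF less.prems(1) Mul] by auto
    have "(\<nexists>t. is_ptree C a t) \<or> (\<nexists>t. is_ptree C b t)"
      using less.prems(2) is_ptree.mul[of C g a b, OF Mul] by blast
    hence "f a = 0 \<or> f b = 0" using less.IH lt less.prems(1) by auto
    thus ?thesis using circ_val_Mul[OF less.prems(1) Mul] by auto
  qed
qed

lemma keys_sum_list_mconst_mult:
  "Poly_Mapping.keys (\<Sum>(c, k)\<leftarrow>cs. mconst c * f k) \<subseteq> (\<Union>(c, k)\<in>set cs. Poly_Mapping.keys (f k))"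
proof (induction cs)
  case (Cons x cs)
  obtain c k where x: "x = (c, k)" by (cases x)
  show ?case
    using Cons keys_add[of "mconst c * f k" "\<Sum>(c, k)\<leftarrow>cs. mconst c * f k"]
      keys_mconst_mult[of c "f k"] by (auto simp: x)
qed simp

lemma keys_circ_val:
  "g < N \<Longrightarrow> m \<in> Poly_Mapping.keys (f g) \<Longrightarrow>
    Poly_Mapping.keys m \<subseteq> vars n (S g) \<and> total_degree m \<le> card (S g)"
proof (induction g arbitrary: m rule: less_induct)
  case (less g)
  show ?case
  proof (cases "C g")
    case (Inp i j)
    thus ?thesis using less.prems label_Inp[OF less.prems(1) Inp]
      by (simp add: circ_val_Inp mvar_def vars_def total_degree_def)
  next
    case (Add cs)
    have "m \<in> Poly_Mapping.keys (\<Sum>(c, k)\<leftarrow>cs. mconst c * f k)"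
      using less.prems circ_val_Add[OF less.prems(1) Add] by simp
    then obtain c k where ck: "(c, k) \<in> set cs" "m \<in> Poly_Mapping.keys (f k)"
      using keys_sum_list_mconst_mult by blast
    have "k < g" by (rule Add_child_less[OF less.prems(1) Add ck(1)])
    thus ?thesis
      using less.IH[OF \<open>k < g\<close> _ ck(2)] less.prems(1) label_Add[OF less.prems(1) Add ck(1)] by simp
  next
    case (Mul a b)
    have ab: "a < g" "b < g" "S a \<inter> S b = {}" "S g = S a \<union> S b"
      using Mul_children_less[OF less.prems(1) Mul] label_Mul[OF less.prems(1) Mul] by auto
    obtain ma mb where m: "m = ma + mb" "ma \<in> Poly_Mapping.keys (f a)" "mb \<in> Poly_Mapping.keys (f b)"
      using less.prems keys_mult[of "f a" "f b"] circ_val_Mul[OF less.prems(1) Mul] by auto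
    have "Poly_Mapping.keys ma \<subseteq> vars n (S a) \<and> total_degree ma \<le> card (S a)"
      using less.IH[OF ab(1) _ m(2)] less.prems(1) ab(1) by simp
    moreover have "Poly_Mapping.keys mb \<subseteq> vars n (S b) \<and> total_degree mb \<le> card (S b)"
      using less.IH[OF ab(2) _ m(3)] less.prems(1) ab(2) by simp
    moreover have "finite (S a)" "finite (S b)"
      using label_subset[of a] label_subset[of b] ab less.prems(1) by (auto intro: finite_subset)
    ultimately show ?thesis
      using m keys_add[of ma mb] ab by (auto simp: vars_def total_degree_add card_Un_disjoint)
  qed
qed

end

fun proot :: "ptree \<Rightarrow> nat" where
  "proot (PT g ts) = g"

fun subptree :: "ptree \<Rightarrow> nat list \<Rightarrow> ptree" where
  "subptree t [] = t"
| "subptree (PT g ts) (k # p) = subptree (ts ! k) p"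

fun graft :: "ptree \<Rightarrow> nat list \<Rightarrow> ptree \<Rightarrow> ptree" where
  "graft t [] t' = t'"
| "graft (PT g ts) (k # p) t' = PT g (ts[k := graft (ts ! k) p t'])"

fun label :: "stree \<Rightarrow> nat set" where
  "label (SNode l ts) = l"

lemma pgate_eq_proot_subptree: "pgate t p = proot (subptree t p)"
  by (induction t p rule: pgate.induct) auto

lemma subptree_append: "subptree t (p @ q) = subptree (subptree t p) q"
  by (induction t p rule: subptree.induct) auto

lemma proot_ptree: "is_ptree C g t \<Longrightarrow> proot t = g"
  by (induction rule: is_ptree.induct) auto

lemma pos_Cons_iff: "pos (SNode l ts) (k # p) \<longleftrightarrow> k < length ts \<and> pos (ts ! k) p"
  by (auto elim: pos.cases intro: pos.child)

lemma pos_leaf_iff: "pos (SNode l []) p \<longleftrightarrow> p = []"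
  by (cases p) (auto simp: pos_Cons_iff intro: pos.here)

lemma pos_append:
  "pos T p \<Longrightarrow> pos (subtree T p) q \<Longrightarrow> pos T (p @ q) \<and> subtree T (p @ q) = subtree (subtree T p) q"
proof (induction p arbitrary: T)
  case (Cons k p)
  thus ?case by (cases T) (auto simp: pos_Cons_iff)
qed simp

lemma pos_snoc:
  assumes "pos T p" "subtree T p = SNode l ts" "k < length ts"
  shows "pos T (p @ [k])" "subtree T (p @ [k]) = ts ! k"
proof -
  have "pos (subtree T p) [k]" using assms by (auto intro: pos.child pos.here)
  thus "pos T (p @ [k])" "subtree T (p @ [k]) = ts ! k" using pos_append[OF assms(1)] assms(2) by auto
qed

lemma subtree_shape: "pos (shape S t) p \<Longrightarrow> subtree (shape S t) p = shape S (subptree t p)"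
proof (induction p arbitrary: t)
  case (Cons k p)
  thus ?case by (cases t) (auto simp: pos_Cons_iff)
qed simp

lemma ptree_cases:
  assumes "is_ptree C g t"
  obtains i j where "C g = Inp i j" "t = PT g []"
  | cs c k t1 where "C g = Add cs" "(c, k) \<in> set cs" "is_ptree C k t1" "t = PT g [t1]"
  | a b ta tb where "C g = Mul a b" "is_ptree C a ta" "is_ptree C b tb" "t = PT g [ta, tb]"
  using assms by (cases rule: is_ptree.cases) auto

lemma ptree_child:
  assumes "is_ptree C g (PT g' ts)" "k < length ts"
  shows "is_ptree C (proot (ts ! k)) (ts ! k)"
  using assms(1) by (cases rule: ptree_cases) (use assms(2) in \<open>auto simp: less_Suc_eq proot_ptree\<close>)

lemma ptree_update_child:
  assumes "is_ptree C g (PT g' ts)" "k < length ts" "is_ptree C (proot (ts ! k)) t'"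
  shows "is_ptree C g (PT g' (ts[k := t']))"
  using assms(1)
proof (cases rule: ptree_cases)
  case (2 cs c k' t1)
  thus ?thesis using assms(2,3) is_ptree.add[of C g cs c k' t'] by (simp add: proot_ptree)
next
  case (3 a b ta tb)
  thus ?thesis using assms(2,3) is_ptree.mul[of C g a b]
    by (auto simp: less_Suc_eq proot_ptree)
qed (use assms(2) in simp)

lemma ptree_subptree:
  "is_ptree C g t \<Longrightarrow> pos (shape S t) p \<Longrightarrow> is_ptree C (pgate t p) (subptree t p)"
proof (induction p arbitrary: g t)
  case Nil thus ?case by (simp add: pgate_eq_proot_subptree proot_ptree)
next
  case (Cons k p)
  obtain g' ts where t: "t = PT g' ts" by (cases t)
  thus ?case using Cons ptree_child[of C g g' ts k] by (auto simp: pos_Cons_iff)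
qed

lemma ptree_graft:
  "is_ptree C g t \<Longrightarrow> pos (shape S t) p \<Longrightarrow> is_ptree C (pgate t p) t' \<Longrightarrow>
    is_ptree C g (graft t p t') \<and> subptree (graft t p t') p = t'"
proof (induction p arbitrary: g t)
  case Nil thus ?case by (simp add: pgate_eq_proot_subptree proot_ptree)
next
  case (Cons k p)
  obtain g' ts where t: "t = PT g' ts" by (cases t)
  have k: "k < length ts" "pos (shape S (ts ! k)) p" using Cons.prems(2) by (auto simp: t pos_Cons_iff)
  have "is_ptree C (proot (ts ! k)) (graft (ts ! k) p t') \<and> subptree (graft (ts ! k) p t') p = t'"
    using Cons.IH[OF ptree_child[OF _ k(1)] k(2)] Cons.prems(1,3) by (simp add: t)
  thus ?case using ptree_update_child[of C g g' ts k] Cons.prems(1) k(1) by (simp add: t)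
qed

lemma depth_child:
  "depth_le (SNode l ts) h \<Longrightarrow> k < length ts \<Longrightarrow> h \<ge> 1 \<and> depth_le (ts ! k) (h - 1)"
  unfolding depth_le_def
proof (intro conjI allI impI)
  assume d: "\<forall>p. pos (SNode l ts) p \<longrightarrow> length p \<le> h" and k: "k < length ts"
  show "h \<ge> 1" using d[rule_format, of "[k]"] k by (auto simp: pos_Cons_iff intro: pos.here)
  fix p assume "pos (ts ! k) p"
  thus "length p \<le> h - 1" using d[rule_format, of "k # p"] k by (auto simp: pos_Cons_iff)
qed

lemma depth_subtree: "depth_le T h \<Longrightarrow> pos T p \<Longrightarrow> depth_le (subtree T p) (h - length p)"
  unfolding depth_le_def using pos_append by fastforce

context sml_circuit
begin

lemma ptree_child_less:
  assumes "is_ptree C g (PT g' ts)" "g < N" "k < length ts"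
  shows "proot (ts ! k) < g"
  using assms(1)
proof (cases rule: ptree_cases)
  case (2 cs c k' t1)
  thus ?thesis using assms(3) Add_child_less[OF assms(2)] by (simp add: proot_ptree)
next
  case (3 a b ta tb)
  thus ?thesis using assms(3) Mul_children_less[OF assms(2)] by (auto simp: less_Suc_eq proot_ptree)
qed (use assms(3) in simp)

lemma pgate_le: "is_ptree C g t \<Longrightarrow> g < N \<Longrightarrow> pos (shape S' t) p \<Longrightarrow> pgate t p \<le> g"
proof (induction p arbitrary: g t)
  case Nil thus ?case by (simp add: pgate_eq_proot_subptree proot_ptree)
next
  case (Cons k p)
  obtain g' ts where t: "t = PT g' ts" by (cases t)
  have k: "k < length ts" "pos (shape S' (ts ! k)) p" using Cons.prems(3) by (auto simp: t pos_Cons_iff)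
  have "proot (ts ! k) < g" using ptree_child_less Cons.prems(1,2) k(1) by (simp add: t)
  moreover have "pgate (ts ! k) p \<le> proot (ts ! k)"
    using Cons.IH[OF ptree_child[OF _ k(1)] _ k(2)] Cons.prems(1,2) calculation by (simp add: t)
  ultimately show ?case by (simp add: t)
qed

end

inductive well_labelled :: "stree \<Rightarrow> bool" where
  leaf: "well_labelled (SNode {i} [])"
| add: "well_labelled a \<Longrightarrow> well_labelled (SNode (label a) [a])"
| mul: "well_labelled a \<Longrightarrow> well_labelled b \<Longrightarrow> label a \<inter> label b = {} \<Longrightarrow>
    well_labelled (SNode (label a \<union> label b) [a, b])"

lemma label_subtree_subset: "well_labelled T \<Longrightarrow> pos T p \<Longrightarrow> label (subtree T p) \<subseteq> label T"
proof (induction arbitrary: p rule: well_labelled.induct)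
  case leaf
  thus ?case by (simp add: pos_leaf_iff)
next
  case (add a)
  thus ?case by (cases p) (auto simp: pos_Cons_iff)
next
  case (mul a b)
  show ?case
  proof (cases p)
    case (Cons k p')
    hence "k = 0 \<and> pos a p' \<or> k = 1 \<and> pos b p'" using mul.prems by (auto simp: pos_Cons_iff less_Suc_eq)
    thus ?thesis using mul.IH(1)[of p'] mul.IH(2)[of p'] Cons by auto
  qed simp
qed

fun Psi_rec :: "nat \<Rightarrow> stree \<Rightarrow> nat \<times> nat \<Rightarrow> 'a::comm_ring_1 poly" where
  "Psi_rec w (SNode l [a, b]) v =
     (if fst v \<in> label a then Phi w L (Psi_rec w a v) else Phi w R (Psi_rec w b v))"
| "Psi_rec w (SNode l [a]) v = Psi_rec w a v"
| "Psi_rec w (SNode l ts) v = monom 1 (snd v)"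

abbreviation is_leaf :: "stree \<Rightarrow> nat \<Rightarrow> nat list \<Rightarrow> bool" where
  "is_leaf T i p \<equiv> pos T p \<and> subtree T p = SNode {i} []"

lemma is_leaf_mul_iff:
  assumes "well_labelled a" "well_labelled b" "label a \<inter> label b = {}"
  shows "is_leaf (SNode (label a \<union> label b) [a, b]) i p \<longleftrightarrow>
    (\<exists>p'. p = (if i \<in> label a then 0 else 1) # p' \<and> is_leaf (if i \<in> label a then a else b) i p')"
proof (cases p)
  case (Cons k p')
  have leaf_in: "i \<in> label x" if "well_labelled x" "is_leaf x i p'" for x
    using label_subtree_subset[OF that(1), of p'] that(2) by simp
  have "is_leaf (SNode (label a \<union> label b) [a, b]) i p \<longleftrightarrow>
      k = 0 \<and> is_leaf a i p' \<or> k = 1 \<and> is_leaf b i p'"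
    unfolding Cons pos_Cons_iff by (auto simp: less_Suc_eq)
  also have "\<dots> \<longleftrightarrow> (if i \<in> label a then k = 0 \<and> is_leaf a i p' else k = 1 \<and> is_leaf b i p')"
    using leaf_in[OF assms(1)] leaf_in[OF assms(2)] assms(3) by auto
  finally show ?thesis using Cons by auto
qed simp

lemma is_leaf_add_iff: "is_leaf (SNode l [a]) i p \<longleftrightarrow> (\<exists>p'. p = 0 # p' \<and> is_leaf a i p')"
  by (cases p) (auto simp: pos_Cons_iff)

lemma ex1_Cons_iff: "(\<exists>!p. \<exists>p'. p = k # p' \<and> P p') \<longleftrightarrow> (\<exists>!p'. P p')"
  by blast

lemma ex1_leaf: "well_labelled T \<Longrightarrow> i \<in> label T \<Longrightarrow> \<exists>!p. is_leaf T i p"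
proof (induction rule: well_labelled.induct)
  case leaf
  thus ?case by (intro ex1I[of _ "[]"]) (simp_all add: pos_leaf_iff)
next
  case (add a)
  thus ?case unfolding is_leaf_add_iff ex1_Cons_iff by simp
next
  case (mul a b)
  show ?case
  proof (cases "i \<in> label a")
    case True
    thus ?thesis using mul.IH(1) unfolding is_leaf_mul_iff[OF mul.hyps] ex1_Cons_iff by simp
  next
    case False
    hence "i \<in> label b" using mul.prems by simp
    thus ?thesis using mul.IH(2) False unfolding is_leaf_mul_iff[OF mul.hyps] ex1_Cons_iff by simp
  qed
qed

lemma foldr_Phi_signature_leaf:
  "well_labelled T \<Longrightarrow> is_leaf T i p \<Longrightarrow>
    foldr (Phi w) (signature T p) (monom 1 j) = (Psi_rec w T (i, j) :: 'a::comm_ring_1 poly)"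
proof (induction arbitrary: p rule: well_labelled.induct)
  case leaf
  thus ?case by (simp add: pos_leaf_iff)
next
  case (add a)
  then obtain p' where "p = 0 # p'" "is_leaf a i p'" unfolding is_leaf_add_iff by blast
  thus ?case using add.IH by simp
next
  case (mul a b)
  then obtain p' where p: "p = (if i \<in> label a then 0 else 1) # p'"
    and "is_leaf (if i \<in> label a then a else b) i p'"
    unfolding is_leaf_mul_iff[OF mul.hyps] by blast
  thus ?case using mul.IH by (cases "i \<in> label a") simp_all
qed

lemma Psi_eq_Psi_rec:
  assumes "well_labelled T" "fst v \<in> label T"
  shows "Psi w T v = (Psi_rec w T v :: 'a::comm_ring_1 poly)"
proof -
  obtain i j where v: "v = (i, j)" by (cases v)
  have "\<exists>!p. is_leaf T i p" using ex1_leaf[OF assms(1)] assms(2) v by simp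
  hence "is_leaf T i (leaf_pos T i)" unfolding leaf_pos_def by (rule theI')
  thus ?thesis using foldr_Phi_signature_leaf[OF assms(1)] v by (simp add: Psi_def)
qed

lemma degree_Phi:
  assumes "w \<ge> 1"
  shows "degree (Phi w a q :: 'a::idom poly) = degree q * w"
proof -
  have "degree (monom 1 w + monom 1 (w - 1) :: 'a poly) = w"
  proof (cases "w = 1")
    case True thus ?thesis by (simp add: monom_0 monom_Suc)
  next
    case False
    thus ?thesis using assms by (subst degree_add_eq_left) (auto simp: degree_monom_eq)
  qed
  thus ?thesis by (cases a) (simp_all add: Phi_def degree_pcompose degree_monom_eq)
qed

lemma degree_Psi_rec_le:
  "w \<ge> 1 \<Longrightarrow> depth_le T h \<Longrightarrow> degree (Psi_rec w T v :: 'a::idom poly) \<le> snd v * w ^ h"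
proof (induction w T v arbitrary: h rule: Psi_rec.induct)
  case (1 w l a b v)
  have h: "h \<ge> 1" "depth_le a (h - 1)" "depth_le b (h - 1)"
    using depth_child[OF "1.prems"(2), of 0] depth_child[OF "1.prems"(2), of 1] by auto
  have "degree (Psi_rec w (SNode l [a, b]) v :: 'a poly) \<le> snd v * w ^ (h - 1) * w"
  proof (cases "fst v \<in> label a")
    case True
    hence "degree (Psi_rec w a v :: 'a poly) \<le> snd v * w ^ (h - 1)" using "1.IH"(1) "1.prems"(1) h(2) by blast
    thus ?thesis using True "1.prems"(1) by (simp add: degree_Phi)
  next
    case False
    hence "degree (Psi_rec w b v :: 'a poly) \<le> snd v * w ^ (h - 1)" using "1.IH"(2) "1.prems"(1) h(3) by blast
    thus ?thesis using False "1.prems"(1) by (simp add: degree_Phi)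
  qed
  also have "\<dots> = snd v * w ^ h" using h(1) by (cases h) (simp_all add: mult_ac)
  finally show ?case .
next
  case (2 w l a v)
  have "h \<ge> 1" "depth_le a (h - 1)" using depth_child[OF "2.prems"(2), of 0] by auto
  hence "degree (Psi_rec w a v :: 'a poly) \<le> snd v * w ^ (h - 1)" using "2.IH" "2.prems"(1) by simp
  also have "\<dots> \<le> snd v * w ^ h" using "2.prems"(1) by (intro mult_left_mono power_increasing) auto
  finally show ?case by simp
qed (simp_all add: degree_monom_eq)

lemma msubst_Psi_rec_left:
  assumes "\<And>m v. m \<in> Poly_Mapping.keys p \<Longrightarrow> v \<in> Poly_Mapping.keys m \<Longrightarrow> fst v \<in> label Ta"
  shows "msubst (Psi_rec w (SNode l [Ta, Tb])) p = Phi w L (msubst (Psi_rec w Ta) p)"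
proof -
  have "msubst (Psi_rec w (SNode l [Ta, Tb])) p = msubst (\<lambda>v. pcompose (Psi_rec w Ta v) (monom 1 w)) p"
    using assms by (intro msubst_cong) (simp add: Phi_def)
  thus ?thesis by (simp add: msubst_pcompose Phi_def)
qed

lemma msubst_Psi_rec_right:
  assumes "\<And>m v. m \<in> Poly_Mapping.keys p \<Longrightarrow> v \<in> Poly_Mapping.keys m \<Longrightarrow> fst v \<notin> label Ta"
  shows "msubst (Psi_rec w (SNode l [Ta, Tb])) p = Phi w R (msubst (Psi_rec w Tb) p)"
proof -
  have "msubst (Psi_rec w (SNode l [Ta, Tb])) p
      = msubst (\<lambda>v. pcompose (Psi_rec w Tb v) (monom 1 w + monom 1 (w - 1))) p"
    using assms by (intro msubst_cong) (simp add: Phi_def)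
  thus ?thesis by (simp add: msubst_pcompose Phi_def)
qed

context sml_circuit
begin

lemma well_labelled_shape:
  "is_ptree C g t \<Longrightarrow> g < N \<Longrightarrow> well_labelled (shape S t) \<and> label (shape S t) = S g"
proof (induction rule: is_ptree.induct)
  case (inp g i j)
  thus ?case using label_Inp[OF inp(2,1)] by (auto intro: well_labelled.leaf)
next
  case (add g cs c k t)
  hence "well_labelled (shape S t) \<and> label (shape S t) = S g"
    using Add_child_less[OF add(5,1,2)] label_Add[OF add(5,1,2)] by simp
  thus ?case using well_labelled.add[of "shape S t"] by simp
next
  case (mul g a b ta tb)
  have "a < g" "b < g" using Mul_children_less[OF mul(6,1)] by auto
  hence "well_labelled (shape S ta) \<and> label (shape S ta) = S a"
    "well_labelled (shape S tb) \<and> label (shape S tb) = S b" using mul by auto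
  moreover have "S a \<inter> S b = {} \<and> S g = S a \<union> S b" using label_Mul[OF mul(6,1)] .
  ultimately show ?case using well_labelled.mul[of "shape S ta" "shape S tb"] by simp
qed

end

section \<open>Faithfulness of the substitution, position by position\<close>

locale upt_circuit = sml_circuit C N S d n rt
  for C :: "nat \<Rightarrow> 'a::field gate" and N S d n rt +
  fixes w r :: nat and T :: stree
  assumes rt_lt: "rt < N"
    and upt: "\<forall>t. is_ptree C rt t \<longrightarrow> shape S t = T"
    and width: "preimage_width C rt T = w"
    and w_pos: "w \<ge> 1"
    and depth: "depth_le T r"
    and char: "CHAR('a) = 0 \<or> CHAR('a) > d * n * w ^ r"
    and ex_ptree: "\<exists>t. is_ptree C rt t"
begin

abbreviation Pre :: "nat list \<Rightarrow> nat set" where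
  "Pre p \<equiv> preimage C rt p"

definition gate_span :: "nat set \<Rightarrow> 'a mpoly set" where
  "gate_span G = {h. \<exists>c. h = (\<Sum>g\<in>G. mconst (c g) * f g)}"

lemma gate_span_0: "0 \<in> gate_span G"
  unfolding gate_span_def by (rule CollectI, rule exI[of _ "\<lambda>_. 0"]) simp

lemma gate_span_add: "x \<in> gate_span G \<Longrightarrow> y \<in> gate_span G \<Longrightarrow> x + y \<in> gate_span G"
  unfolding gate_span_def
proof clarify
  fix c c'
  show "\<exists>c''. (\<Sum>g\<in>G. mconst (c g) * f g) + (\<Sum>g\<in>G. mconst (c' g) * f g)
      = (\<Sum>g\<in>G. mconst (c'' g) * f g)"
    by (rule exI[of _ "\<lambda>g. c g + c' g"]) (simp add: mconst_add sum.distrib algebra_simps)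
qed

lemma gate_span_scale: "x \<in> gate_span G \<Longrightarrow> mconst a * x \<in> gate_span G"
  unfolding gate_span_def
proof clarify
  fix c
  show "\<exists>c'. mconst a * (\<Sum>g\<in>G. mconst (c g) * f g) = (\<Sum>g\<in>G. mconst (c' g) * f g)"
    by (rule exI[of _ "\<lambda>g. a * c g"]) (simp add: mconst_mult sum_distrib_left mult.assoc)
qed

lemma gate_span_base: "finite G \<Longrightarrow> g \<in> G \<Longrightarrow> f g \<in> gate_span G"
  unfolding gate_span_def
proof (rule CollectI, rule exI[of _ "\<lambda>x. if x = g then 1 else 0"])
  assume "finite G" "g \<in> G"
  have "(\<Sum>x\<in>G. mconst (if x = g then 1 else 0) * f x) = (\<Sum>x\<in>G. if x = g then f x else 0)"
    by (rule sum.cong) (auto simp: mconst_def)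
  thus "f g = (\<Sum>x\<in>G. mconst (if x = g then 1 else 0) * f x)" using \<open>finite G\<close> \<open>g \<in> G\<close> by simp
qed

lemma gate_span_sum: "(\<And>i. i \<in> I \<Longrightarrow> h i \<in> gate_span G) \<Longrightarrow> sum h I \<in> gate_span G"
  by (induction I rule: infinite_finite_induct) (auto intro: gate_span_0 gate_span_add)

lemma gate_span_sum_list:
  "(\<And>x. x \<in> set xs \<Longrightarrow> h x \<in> gate_span G) \<Longrightarrow> sum_list (map h xs) \<in> gate_span G"
  by (induction xs) (auto intro: gate_span_0 gate_span_add)

lemma gate_span_combination:
  "finite G \<Longrightarrow> (\<And>x. x \<in> X \<Longrightarrow> e x \<in> G) \<Longrightarrow> (\<Sum>x\<in>X. mconst (c x) * f (e x)) \<in> gate_span G"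
  by (intro gate_span_sum gate_span_scale gate_span_base)

lemma gate_span_subset:
  "(\<And>g. g \<in> G \<Longrightarrow> f g \<in> gate_span G') \<Longrightarrow> gate_span G \<subseteq> gate_span G'"
  unfolding gate_span_def[of G] by (auto intro!: gate_span_sum gate_span_scale)

lemma shape_eq: "is_ptree C rt t \<Longrightarrow> shape S t = T"
  using upt by blast

lemma Pre_node:
  assumes p: "pos T p" and st: "subtree T p = SNode l ts" and g: "g \<in> Pre p"
  obtains ts' where "is_ptree C g (PT g ts')" "map (shape S) ts' = ts" "S g = l" "g < N"
proof -
  obtain t where t: "is_ptree C rt t" "pgate t p = g" using g unfolding preimage_def by blast
  have pos: "pos (shape S t) p" using p shape_eq[OF t(1)] by simp
  obtain g' ts' where sub: "subptree t p = PT g' ts'" by (cases "subptree t p")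
  have "is_ptree C g (subptree t p)" using ptree_subptree[OF t(1) pos] t(2) by simp
  moreover have "g' = g" using t(2) sub by (simp add: pgate_eq_proot_subptree)
  moreover have "shape S (PT g' ts') = SNode l ts"
    using subtree_shape[OF pos] shape_eq[OF t(1)] st sub by simp
  moreover have "g < N" using pgate_le[OF t(1) rt_lt pos] t(2) rt_lt by simp
  ultimately show ?thesis using that sub by simp
qed

lemma child_in_Pre:
  assumes p: "pos T p" and g: "g \<in> Pre p"
    and pt: "is_ptree C g (PT g ts')" and k: "k < length ts'"
  shows "proot (ts' ! k) \<in> Pre (p @ [k])"
proof -
  obtain t where t: "is_ptree C rt t" "pgate t p = g" using g unfolding preimage_def by blast
  have pos: "pos (shape S t) p" using p shape_eq[OF t(1)] by simp
  have "is_ptree C rt (graft t p (PT g ts')) \<and> subptree (graft t p (PT g ts')) p = PT g ts'"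
    using ptree_graft[OF t(1) pos] pt t(2) by simp
  moreover have "pgate (graft t p (PT g ts')) (p @ [k]) = proot (ts' ! k)"
    using calculation by (simp add: pgate_eq_proot_subptree subptree_append)
  ultimately show ?thesis
    unfolding preimage_def by (intro CollectI exI[of _ "graft t p (PT g ts')"]) simp
qed

lemma Pre_subset: "pos T p \<Longrightarrow> Pre p \<subseteq> {..rt}"
  unfolding preimage_def using pgate_le[OF _ rt_lt] shape_eq by fastforce

lemma finite_Pre: "pos T p \<Longrightarrow> finite (Pre p)"
  using Pre_subset finite_subset by blast

lemma card_Pre_le: assumes "pos T p" shows "card (Pre p) \<le> w"
proof -
  have "{card (Pre q) | q. pos T q} \<subseteq> {..Suc rt}"
    using card_mono[OF _ Pre_subset] by fastforce
  hence "card (Pre p) \<le> Max {card (Pre q) | q. pos T q}"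
    using assms by (intro Max_ge) (auto intro: finite_subset)
  thus ?thesis using width unfolding preimage_width_def by simp
qed

lemma Pre_root: "Pre [] = {rt}"
  using ex_ptree proot_ptree[of C rt] by (auto simp: preimage_def pgate_eq_proot_subptree)

definition faithful :: "nat list \<Rightarrow> bool" where
  "faithful p \<longleftrightarrow> (\<forall>h\<in>gate_span (Pre p). h \<noteq> 0 \<longrightarrow> msubst (Psi_rec w (subtree T p)) h \<noteq> 0)"

lemma faithfulD:
  assumes "faithful q" "pos T q" "\<And>x. x \<in> X \<Longrightarrow> e x \<in> Pre q"
    and "msubst (Psi_rec w (subtree T q)) (\<Sum>x\<in>X. mconst (c x) * f (e x)) = 0"
  shows "(\<Sum>x\<in>X. mconst (c x) * f (e x)) = 0"
  using assms gate_span_combination[OF finite_Pre[OF assms(2)]] unfolding faithful_def by blast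

text \<open>All gates occupying a leaf read variables \<open>y\<^sub>i\<^sub>j\<close> of one block \<open>i\<close>, and \<open>y\<^sub>i\<^sub>j \<mapsto> t\<^sup>j\<close>
  keeps them apart.\<close>

lemma faithful_leaf:
  assumes p: "pos T p" and st: "subtree T p = SNode l []"
  shows "faithful p"
  unfolding faithful_def
proof (intro ballI impI)
  fix h assume "h \<in> gate_span (Pre p)" and h: "h \<noteq> 0"
  then obtain c where hc: "h = (\<Sum>g\<in>Pre p. mconst (c g) * f g)" unfolding gate_span_def by blast
  define j where "j g = (case C g of Inp i j \<Rightarrow> j | _ \<Rightarrow> 0)" for g
  have input: "\<exists>i. C g = Inp i (j g) \<and> l = {i}" if g: "g \<in> Pre p" for g
  proof -
    obtain ts' where "is_ptree C g (PT g ts')" "map (shape S) ts' = []" "S g = l" "g < N"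
      by (rule Pre_node[OF p st g])
    thus ?thesis using label_Inp by (auto simp: j_def elim: ptree_cases)
  qed
  obtain g0 where "g0 \<in> Pre p" using h hc by fastforce
  then obtain i where "l = {i}" using input by blast
  hence f_input: "f g = mvar (i, j g)" if "g \<in> Pre p" for g
    using input[OF that] by (auto simp: circ_val_Inp)
  have lookup_h: "Poly_Mapping.lookup h M
      = (\<Sum>g\<in>Pre p. c g * (if Poly_Mapping.single (i, j g) 1 = M then 1 else 0))" for M
    unfolding hc by (simp add: lookup_sum lookup_mconst_mult f_input mvar_def lookup_single when_def)
  obtain M where M: "Poly_Mapping.lookup h M \<noteq> 0" using h poly_mapping_eqI[of h 0] by auto
  have "\<exists>g\<in>Pre p. Poly_Mapping.single (i, j g) 1 = M"
  proof (rule ccontr)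
    assume "\<not> ?thesis"
    hence "Poly_Mapping.lookup h M = 0" unfolding lookup_h by (intro sum.neutral) auto
    thus False using M by simp
  qed
  then obtain g1 where g1: "Poly_Mapping.single (i, j g1) 1 = M" by blast
  have "msubst (Psi_rec w (subtree T p)) h = (\<Sum>g\<in>Pre p. smult (c g) (monom 1 (j g)))"
    unfolding hc st msubst_sum by (intro sum.cong refl) (simp add: msubst_mconst_mult f_input)
  hence "coeff (msubst (Psi_rec w (subtree T p)) h) (j g1)
      = (\<Sum>g\<in>Pre p. c g * (if j g = j g1 then 1 else 0))"
    by (simp add: coeff_sum coeff_monom)
  also have "\<dots> = Poly_Mapping.lookup h M"
    unfolding lookup_h g1[symmetric] by (intro sum.cong refl) (simp add: single_eq_single_iff)
  finally have "coeff (msubst (Psi_rec w (subtree T p)) h) (j g1) = Poly_Mapping.lookup h M" .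
  thus "msubst (Psi_rec w (subtree T p)) h \<noteq> 0" using M by auto
qed

lemma faithful_add:
  assumes p: "pos T p" and st: "subtree T p = SNode l [T0]" and IH: "faithful (p @ [0])"
  shows "faithful p"
proof -
  have p0: "pos T (p @ [0])" "subtree T (p @ [0]) = T0" using pos_snoc[OF p st, of 0] by auto
  have "f g \<in> gate_span (Pre (p @ [0]))" if g: "g \<in> Pre p" for g
  proof -
    obtain ts' where pt: "is_ptree C g (PT g ts')" "map (shape S) ts' = [T0]" "S g = l" "g < N"
      by (rule Pre_node[OF p st g])
    obtain cs where Cg: "C g = Add cs" using pt(1,2) by (cases rule: ptree_cases) auto
    have "mconst c * f k \<in> gate_span (Pre (p @ [0]))" if ck: "(c, k) \<in> set cs" for c k
    proof (cases "\<exists>t. is_ptree C k t")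
      case True
      then obtain t where t: "is_ptree C k t" by blast
      have "k \<in> Pre (p @ [0])"
        using child_in_Pre[OF p g is_ptree.add[of C g cs c k, OF Cg ck t], of 0] proot_ptree[OF t] by simp
      thus ?thesis using finite_Pre[OF p0(1)] by (intro gate_span_scale gate_span_base)
    next
      case False
      thus ?thesis
        using circ_val_eq_0_if_no_ptree Add_child_less[OF pt(4) Cg ck] pt(4) gate_span_0 by simp
    qed
    thus ?thesis unfolding circ_val_Add[OF pt(4) Cg] by (auto intro: gate_span_sum_list)
  qed
  hence "gate_span (Pre p) \<subseteq> gate_span (Pre (p @ [0]))" by (rule gate_span_subset)
  moreover have "Psi_rec w (subtree T p) = (Psi_rec w T0 :: nat \<times> nat \<Rightarrow> 'a poly)"
    using st by (intro ext) simp
  ultimately show ?thesis using IH p0(2) unfolding faithful_def by auto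
qed

definition mul_left :: "nat \<Rightarrow> nat" where
  "mul_left g = (case C g of Mul a b \<Rightarrow> a | _ \<Rightarrow> g)"

definition mul_right :: "nat \<Rightarrow> nat" where
  "mul_right g = (case C g of Mul a b \<Rightarrow> b | _ \<Rightarrow> g)"

lemma Pre_Mul:
  assumes p: "pos T p" and st: "subtree T p = SNode l [Ta, Tb]" and g: "g \<in> Pre p"
  shows "C g = Mul (mul_left g) (mul_right g) \<and> mul_left g \<in> Pre (p @ [0]) \<and>
    mul_right g \<in> Pre (p @ [1]) \<and> S (mul_left g) = label Ta \<and> S (mul_right g) = label Tb \<and>
    label Ta \<inter> label Tb = {} \<and> mul_left g < N \<and> mul_right g < N \<and> g < N"
proof -
  obtain ts' where pt: "is_ptree C g (PT g ts')" "map (shape S) ts' = [Ta, Tb]" "S g = l" "g < N"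
    by (rule Pre_node[OF p st g])
  obtain a b ta tb where Cg: "C g = Mul a b" "is_ptree C a ta" "is_ptree C b tb" "ts' = [ta, tb]"
    using pt(1,2) by (cases rule: ptree_cases) auto
  have ab: "a < N" "b < N" using Mul_children_less[OF pt(4) Cg(1)] pt(4) by auto
  have "a \<in> Pre (p @ [0])" "b \<in> Pre (p @ [1])"
    using child_in_Pre[OF p g pt(1), of 0] child_in_Pre[OF p g pt(1), of 1] Cg
    by (simp_all add: proot_ptree)
  moreover have "S a = label Ta" "S b = label Tb"
    using well_labelled_shape[OF Cg(2) ab(1)] well_labelled_shape[OF Cg(3) ab(2)] pt(2) Cg(4) by auto
  moreover have "label Ta \<inter> label Tb = {}"
    using label_Mul[OF pt(4) Cg(1)] calculation(3,4) by simp
  ultimately show ?thesis using Cg(1) ab pt(4) by (simp add: mul_left_def mul_right_def)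
qed

lemma msubst_Mul_gate:
  assumes p: "pos T p" and st: "subtree T p = SNode l [Ta, Tb]" and g: "g \<in> Pre p"
  shows "msubst (Psi_rec w (subtree T p)) (f g) =
    Phi w L (msubst (Psi_rec w Ta) (f (mul_left g))) * Phi w R (msubst (Psi_rec w Tb) (f (mul_right g)))"
proof -
  note lr = Pre_Mul[OF p st g]
  have "msubst (Psi_rec w (subtree T p)) (f (mul_left g)) = Phi w L (msubst (Psi_rec w Ta) (f (mul_left g)))"
    unfolding st using keys_circ_val[of "mul_left g"] lr
    by (intro msubst_Psi_rec_left) (fastforce simp: vars_def)
  moreover have "msubst (Psi_rec w (subtree T p)) (f (mul_right g))
      = Phi w R (msubst (Psi_rec w Tb) (f (mul_right g)))"
    unfolding st using keys_circ_val[of "mul_right g"] lr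
    by (intro msubst_Psi_rec_right) (fastforce simp: vars_def)
  ultimately show ?thesis using lr by (simp add: circ_val_Mul msubst_mult)
qed

lemma degree_msubst_Psi_rec_le:
  assumes "g < N" "depth_le T' h" "h \<le> r"
  shows "degree (msubst (Psi_rec w T') (f g)) \<le> d * (n * w ^ r)"
proof -
  have "degree (msubst (Psi_rec w T') (f g)) \<le> card (S g) * (n * w ^ r)"
  proof (rule degree_msubst_le)
    fix m v assume "m \<in> Poly_Mapping.keys (f g)" "v \<in> Poly_Mapping.keys m"
    hence "snd v \<le> n" using keys_circ_val[OF assms(1)] by (auto simp: vars_def)
    moreover have "degree (Psi_rec w T' v :: 'a poly) \<le> snd v * w ^ h"
      using w_pos assms(2) by (rule degree_Psi_rec_le)
    moreover have "snd v * w ^ h \<le> n * w ^ r"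
      using w_pos assms(3) calculation(1) by (intro mult_mono power_increasing) auto
    ultimately show "degree (Psi_rec w T' v :: 'a poly) \<le> n * w ^ r" by linarith
  qed (use keys_circ_val[OF assms(1)] in blast)
  also have "\<dots> \<le> d * (n * w ^ r)"
    using card_mono[OF _ label_subset[OF assms(1)]] by (intro mult_right_mono) auto
  finally show ?thesis .
qed

lemma faithful_mul:
  assumes p: "pos T p" and st: "subtree T p = SNode l [Ta, Tb]"
    and IHa: "faithful (p @ [0])" and IHb: "faithful (p @ [1])"
  shows "faithful p"
  unfolding faithful_def
proof (intro ballI impI notI)
  fix h assume "h \<in> gate_span (Pre p)" and h: "h \<noteq> 0"
    and vanish: "msubst (Psi_rec w (subtree T p)) h = 0"
  then obtain c where hc: "h = (\<Sum>g\<in>Pre p. mconst (c g) * f g)" unfolding gate_span_def by blast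
  have pa: "pos T (p @ [0])" "subtree T (p @ [0]) = Ta" using pos_snoc[OF p st, of 0] by auto
  have pb: "pos T (p @ [1])" "subtree T (p @ [1]) = Tb" using pos_snoc[OF p st, of 1] by auto
  note lr = Pre_Mul[OF p st]
  define X where "X g = msubst (Psi_rec w Ta) (f (mul_left g))" for g
  define Y where "Y g = msubst (Psi_rec w Tb) (f (mul_right g))" for g
  have "(\<Sum>g\<in>Pre p. smult (c g) (Phi w L (X g) * Phi w R (Y g))) = 0"
    using vanish unfolding hc msubst_sum
    by (simp add: msubst_mconst_mult msubst_Mul_gate[OF p st] X_def Y_def cong: sum.cong)
  hence tensor: "(\<Sum>g\<in>Pre p. smult (c g * coeff (Y g) k) (X g)) = 0" for k
  proof (intro tensor_sum_eq_0_if_Phi_sum_eq_0[OF w_pos finite_Pre[OF p] card_Pre_le[OF p]])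
    show "degree (Y g) \<le> d * (n * w ^ r)" if "g \<in> Pre p" for g
      unfolding Y_def using lr[OF that] depth_subtree[OF depth pb(1)] pb(2)
      by (intro degree_msubst_Psi_rec_le) auto
    show "CHAR('a) = 0 \<or> d * (n * w ^ r) < CHAR('a)" using char by (simp add: mult.assoc)
  qed
  have left_0: "(\<Sum>g\<in>Pre p. mconst (c g * coeff (Y g) k) * f (mul_left g)) = 0" for k
    using IHa pa tensor[of k] lr
    by (intro faithfulD[of "p @ [0]"]) (simp_all add: msubst_sum msubst_mconst_mult X_def)
  have right_0: "(\<Sum>g\<in>Pre p. mconst (c g * Poly_Mapping.lookup (f (mul_left g)) m) * f (mul_right g)) = 0"
    for m
  proof (rule faithfulD[OF IHb pb(1)])
    show "mul_right g \<in> Pre (p @ [1])" if "g \<in> Pre p" for g using lr[OF that] by simp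
    show "msubst (Psi_rec w (subtree T (p @ [1])))
        (\<Sum>g\<in>Pre p. mconst (c g * Poly_Mapping.lookup (f (mul_left g)) m) * f (mul_right g)) = 0"
      unfolding pb(2) using left_0
      by (intro poly_eqI) (simp add: coeff_msubst_sum_eq_lookup_sum Y_def)
  qed
  obtain g0 where "g0 \<in> Pre p" using h hc by fastforce
  hence disj: "label Ta \<inter> label Tb = {}" using lr by blast
  have "h = (\<Sum>g\<in>Pre p. mconst (c g) * (f (mul_left g) * f (mul_right g)))"
    unfolding hc using lr by (intro sum.cong refl) (simp add: circ_val_Mul)
  also have "\<dots> = 0"
  proof (rule sum_mult_disjoint_vars_eq_0[OF _ _ _ right_0])
    show "Poly_Mapping.keys m \<subseteq> vars n (label Ta)"
      if "g \<in> Pre p" "m \<in> Poly_Mapping.keys (f (mul_left g))" for g m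
      using keys_circ_val[of "mul_left g" m] lr[OF that(1)] that(2) by auto
    show "Poly_Mapping.keys m \<subseteq> vars n (label Tb)"
      if "g \<in> Pre p" "m \<in> Poly_Mapping.keys (f (mul_right g))" for g m
      using keys_circ_val[of "mul_right g" m] lr[OF that(1)] that(2) by auto
  qed (use disj in \<open>auto simp: vars_def\<close>)
  finally show False using h by simp
qed

lemma shape_children:
  assumes "pos T p" "subtree T p = SNode l ts"
  shows "ts = [] \<or> (\<exists>T0. ts = [T0]) \<or> (\<exists>Ta Tb. ts = [Ta, Tb])"
proof -
  obtain t where t: "is_ptree C rt t" using ex_ptree by blast
  have "pos (shape S t) p" using assms(1) shape_eq[OF t] by simp
  hence "is_ptree C (pgate t p) (subptree t p)" "shape S (subptree t p) = SNode l ts"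
    using ptree_subptree[OF t] subtree_shape shape_eq[OF t] assms(2) by auto
  thus ?thesis by (cases rule: ptree_cases) auto
qed

lemma faithful_everywhere: "pos T p \<Longrightarrow> faithful p"
proof (induction "r - length p" arbitrary: p rule: less_induct)
  case less
  obtain l ts where st: "subtree T p = SNode l ts" by (cases "subtree T p")
  have IH: "faithful (p @ [k])" if "k < length ts" for k
  proof -
    have "pos T (p @ [k])" using pos_snoc[OF less.prems st that] by simp
    moreover have "length (p @ [k]) \<le> r" using calculation depth unfolding depth_le_def by blast
    ultimately show ?thesis using less.hyps by simp
  qed
  from shape_children[OF less.prems st] show ?case
    using faithful_leaf[OF less.prems] faithful_add[OF less.prems] faithful_mul[OF less.prems]
      st IH[of 0] IH[of 1] by auto
qed

lemma circ_val_neq_0_iff: "f rt \<noteq> 0 \<longleftrightarrow> msubst (Psi w T) (f rt) \<noteq> 0"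
proof
  assume "f rt \<noteq> 0"
  moreover have "f rt \<in> gate_span (Pre [])" unfolding Pre_root by (rule gate_span_base) auto
  ultimately have "msubst (Psi_rec w T) (f rt) \<noteq> 0"
    using faithful_everywhere[OF pos.here] unfolding faithful_def by simp
  moreover have "msubst (Psi w T) (f rt) = msubst (Psi_rec w T) (f rt)"
  proof (rule msubst_cong)
    fix m v assume "m \<in> Poly_Mapping.keys (f rt)" "v \<in> Poly_Mapping.keys m"
    hence "fst v \<in> S rt" using keys_circ_val[OF rt_lt] by (auto simp: vars_def)
    moreover have "well_labelled T \<and> label T = S rt"
      using ex_ptree well_labelled_shape[OF _ rt_lt] shape_eq by blast
    ultimately show "Psi w T v = Psi_rec w T v" by (intro Psi_eq_Psi_rec) auto
  qed
  ultimately show "msubst (Psi w T) (f rt) \<noteq> 0" by simp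
qed auto

end

theorem mainTheorem16:
  fixes C :: "nat \<Rightarrow> 'a::field gate"
    and N rt d n w r :: nat
    and S :: "nat \<Rightarrow> nat set"
    and T :: stree
  assumes wf: "circuit_wf C N"
    and rt_lt: "rt < N"
    and sml: "set_multilinear C N S d n rt"
    and upt: "\<forall>t. is_ptree C rt t \<longrightarrow> shape S t = T"
    and width: "preimage_width C rt T = w"
    and w_pos: "w \<ge> 1"
    and depth: "depth_le T r"
    and char: "CHAR('a) = 0 \<or> CHAR('a) > d * n * w ^ r"
  shows "circ_val C rt \<noteq> 0 \<longleftrightarrow> msubst (Psi w T) (circ_val C rt) \<noteq> 0"
proof (cases "\<exists>t. is_ptree C rt t")
  case True
  interpret upt_circuit C N S d n rt w r T
    by unfold_locales (use assms True in auto)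
  show ?thesis by (rule circ_val_neq_0_iff)
next
  case False
  interpret sml_circuit C N S d n rt by unfold_locales (use wf sml in auto)
  show ?thesis using circ_val_eq_0_if_no_ptree[OF rt_lt False] by simp
qed

end
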